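(* Let $\mathcal{X}$ be a countably generated operator $*$-correspondence from $\mathcal{A}$ to $\mathcal{B}$. Then there exists a sequence $\{\xi_n\}$ in $\mathcal{X}$ such that (1) $\{\xi_n b: b\in\mathcal{B},\ n\in\mathbb{N}\}$ spans a norm-dense subspace of the $C^*$-completion $X$; (2) the sequence of finite rows $\sum_{n=1}^N\xi_ne_{1n}$ is Cauchy in $\ell^2(\mathbb{N},\mathcal{X})^t$. Furthermore, $X$ is differentiable from $\mathcal{A}$ to $\mathcal{B}$, and for any sequence $\{\xi_n\}$ satisfying (1) and (2), $\{\iota(\xi_n)\}$ is a differentiable generating sequence (with $\iota:\mathcal{X}\to X$ the inclusion).
   Context: Operator $*$-algebras and operator $*$-correspondences: $\mathcal{A},\mathcal{B}$ are operator spaces and Banach $*$-algebras with completely contractive multiplication and $\|x^*\|=\|x\|$ at all matrix levels, each with a fixed $C^*$-norm, $\sigma$-unital completion $A$, $B$ and completely bounded inclusion. $\mathcal{X}$ is an operator $\mathcal{A}$-$\mathcal{B}$-bimodule (completely contractive actions) with a pairing into $\mathcal{B}$, right $\mathcal{B}$-linear, hermitian, $\langle\xi,a\eta\rangle=\langle a^*\xi,\eta\rangle$, $\|\langle\xi,\eta\rangle\|\le\|\xi\|\|\eta\|$ on matrices ($\langle\xi,\eta\rangle_{ij}=\sum_k\langle\xi_{ki},\eta_{kj}\rangle$), positive and definite in $B$, with $\|\langle a\xi,a\xi\rangle\|_\infty\le\|a\|_\infty^2\|\langle\xi,\xi\rangle\|_\infty$; $X$ is the completion in $\|\langle\xi,\xi\rangle\|_\infty^{1/2}$.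 Countably generated: there is a sequence $(\eta_n)$ in $X$ with $\mathrm{span}\{\eta_nb:b\in\mathcal{B}\}$ dense in $X$. Row correspondence $\ell^2(\mathbb{N},\mathcal{X})^t$: completion of finitely supported rows $\sum_n x_ne_{1n}$, where a finite row $(x_1,\dots,x_N)$ has norm equal to the $M_N(\mathcal{X})$-norm of the matrix with that first row and zeros elsewhere. $K_{\mathcal{B}}$: completion of finitely supported infinite matrices over $\mathcal{B}$ in the norm $\sup_n\|\pi_n(\cdot)\|$, $\pi_n$ truncation to the $n\times n$ corner, with matrix norms defined the same way. A $C^*$-correspondence $X$ from $A$ to $B$ is differentiable from $\mathcal{A}$ to $\mathcal{B}$ if there is a sequence $\{\xi_n\}$ in $X$ (a differentiable generating sequence) such that: $\mathrm{span}\{\xi_nb:b\in B\}$ is dense in $X$; $\langle\xi_n,(a+\lambda)\xi_m\rangle\in\mathcal{B}$ for $a\in\mathcal{A},\lambda\in\mathbb{C}$; the finite matrices $\sum_{n,m\le N}\langle\xi_n,(a+\lambda)\xi_m\rangle e_{nm}$ form a Cauchy sequence in $K_{\mathcal{B}}$; and $\tau:\mathcal{A}\to K_{\mathcal{B}}$, $a\mapsto\sum_{n,m}\langle\xi_n,a\xi_m\rangle e_{nm}$, is completely bounded. *)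

theory Defs
  imports "HOL-Analysis.Analysis"
begin

section \<open>Matrices (0-indexed, n x n matrices as functions nat => nat => 'v)\<close>

definition matin :: "'v set \<Rightarrow> nat \<Rightarrow> (nat \<Rightarrow> nat \<Rightarrow> 'v) \<Rightarrow> bool" where
  "matin V n x \<longleftrightarrow> (\<forall>i<n. \<forall>j<n. x i j \<in> V)"

definition cmatnorm :: "nat \<Rightarrow> nat \<Rightarrow> (nat \<Rightarrow> nat \<Rightarrow> complex) \<Rightarrow> real" where
  "cmatnorm n m \<alpha> = Sup {sqrt (\<Sum>i<n. (cmod (\<Sum>j<m. \<alpha> i j * v j))\<^sup>2) | v.
                          (\<Sum>j<m. (cmod (v j))\<^sup>2) \<le> 1}"

text \<open>alpha x beta for alpha n x m, x m x m, beta m x n scalar matrices.\<close>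
definition smul :: "(complex \<Rightarrow> 'v \<Rightarrow> 'v) \<Rightarrow> nat \<Rightarrow> (nat \<Rightarrow> nat \<Rightarrow> complex)
    \<Rightarrow> (nat \<Rightarrow> nat \<Rightarrow> 'v::comm_monoid_add) \<Rightarrow> (nat \<Rightarrow> nat \<Rightarrow> complex) \<Rightarrow> nat \<Rightarrow> nat \<Rightarrow> 'v" where
  "smul sc m \<alpha> x \<beta> = (\<lambda>i j. \<Sum>k<m. \<Sum>l<m. sc (\<alpha> i k * \<beta> l j) (x k l))"

definition dsum :: "nat \<Rightarrow> (nat \<Rightarrow> nat \<Rightarrow> 'v::zero) \<Rightarrow> (nat \<Rightarrow> nat \<Rightarrow> 'v) \<Rightarrow> nat \<Rightarrow> nat \<Rightarrow> 'v" where
  "dsum n x y = (\<lambda>i j. if i < n \<and> j < n then x i j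
                       else if n \<le> i \<and> n \<le> j then y (i - n) (j - n) else 0)"

definition mprod :: "nat \<Rightarrow> (nat \<Rightarrow> nat \<Rightarrow> 'a::semiring_0) \<Rightarrow> (nat \<Rightarrow> nat \<Rightarrow> 'a) \<Rightarrow> nat \<Rightarrow> nat \<Rightarrow> 'a" where
  "mprod n x y = (\<lambda>i j. \<Sum>k<n. x i k * y k j)"

text \<open>Block matrix in M_{kn} from a k x k matrix of n x n matrices: entry (p*n+i, q*n+j) = F p q i j.\<close>
definition blk :: "nat \<Rightarrow> nat \<Rightarrow> (nat \<Rightarrow> nat \<Rightarrow> nat \<Rightarrow> nat \<Rightarrow> 'v::zero) \<Rightarrow> nat \<Rightarrow> nat \<Rightarrow> 'v" where
  "blk k n F = (\<lambda>r s. if r < k * n \<and> s < k * n then F (r div n) (s div n) (r mod n) (s mod n) else 0)"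

definition cspan :: "(complex \<Rightarrow> 'v \<Rightarrow> 'v) \<Rightarrow> 'v set \<Rightarrow> 'v::comm_monoid_add set" where
  "cspan sc S = {x. \<exists>F c. finite F \<and> F \<subseteq> S \<and> x = (\<Sum>s\<in>F. sc (c s) s)}"

section \<open>Operator spaces (Ruan's axioms) on a subspace V of an ambient complex vector space\<close>

definition operator_space ::
  "(complex \<Rightarrow> 'v::ab_group_add \<Rightarrow> 'v) \<Rightarrow> 'v set \<Rightarrow> (nat \<Rightarrow> (nat \<Rightarrow> nat \<Rightarrow> 'v) \<Rightarrow> real) \<Rightarrow> bool" where
  "operator_space sc V mn \<longleftrightarrow>
     0 \<in> V \<and> (\<forall>x\<in>V. \<forall>y\<in>V. x + y \<in> V) \<and> (\<forall>c. \<forall>x\<in>V. sc c x \<in> V) \<and>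
     (\<forall>n x y. (\<forall>i<n. \<forall>j<n. x i j = y i j) \<longrightarrow> mn n x = mn n y) \<and>
     (\<forall>n\<ge>1. \<forall>x. matin V n x \<longrightarrow>
        0 \<le> mn n x \<and> (mn n x = 0 \<longleftrightarrow> (\<forall>i<n. \<forall>j<n. x i j = 0)) \<and>
        (\<forall>c. mn n (\<lambda>i j. sc c (x i j)) = cmod c * mn n x) \<and>
        (\<forall>y. matin V n y \<longrightarrow> mn n (\<lambda>i j. x i j + y i j) \<le> mn n x + mn n y)) \<and>
     (\<forall>n\<ge>1. \<forall>m\<ge>1. \<forall>x \<alpha> \<beta>. matin V m x \<longrightarrow>
        mn n (smul sc m \<alpha> x \<beta>) \<le> cmatnorm n m \<alpha> * mn m x * cmatnorm m n \<beta>) \<and>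
     (\<forall>n\<ge>1. \<forall>m\<ge>1. \<forall>x y. matin V n x \<longrightarrow> matin V m y \<longrightarrow>
        mn (n + m) (dsum n x y) = max (mn n x) (mn m y))"

definition cstar_algebra :: "(complex \<Rightarrow> 'a::{real_normed_algebra,banach} \<Rightarrow> 'a) \<Rightarrow> ('a \<Rightarrow> 'a) \<Rightarrow> bool" where
  "cstar_algebra sc st \<longleftrightarrow>
     (\<forall>r x. sc (complex_of_real r) x = r *\<^sub>R x) \<and>
     (\<forall>c d x. sc (c + d) x = sc c x + sc d x) \<and>
     (\<forall>c x y. sc c (x + y) = sc c x + sc c y) \<and>
     (\<forall>c d x. sc c (sc d x) = sc (c * d) x) \<and>
     (\<forall>c x y. sc c (x * y) = sc c x * y \<and> sc c (x * y) = x * sc c y) \<and>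
     (\<forall>c x. norm (sc c x) = cmod c * norm x) \<and>
     (\<forall>x y. st (x + y) = st x + st y) \<and>
     (\<forall>c x. st (sc c x) = sc (cnj c) (st x)) \<and>
     (\<forall>x y. st (x * y) = st y * st x) \<and>
     (\<forall>x. st (st x) = x) \<and>
     (\<forall>x. norm (st x * x) = (norm x)\<^sup>2)"

definition positive :: "('a::times \<Rightarrow> 'a) \<Rightarrow> 'a \<Rightarrow> bool" where
  "positive st x \<longleftrightarrow> (\<exists>y. x = st y * y)"

definition sigma_unital :: "('a::{real_normed_algebra,banach} \<Rightarrow> 'a) \<Rightarrow> bool" where
  "sigma_unital st \<longleftrightarrow> (\<exists>e::nat \<Rightarrow> 'a.
     (\<forall>n. positive st (e n) \<and> norm (e n) \<le> 1 \<and> positive st (e (Suc n) - e n)) \<and>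
     (\<forall>a. (\<lambda>n. e n * a) \<longlonglongrightarrow> a \<and> (\<lambda>n. a * e n) \<longlonglongrightarrow> a))"

text \<open>The C*-norm on M_n(A), via the faithful action of M_n(A) on the Hilbert module A^n.\<close>
definition cmatn :: "('a::{real_normed_algebra,banach} \<Rightarrow> 'a) \<Rightarrow> nat \<Rightarrow> (nat \<Rightarrow> nat \<Rightarrow> 'a) \<Rightarrow> real" where
  "cmatn st n x = Sup {norm (\<Sum>i<n. \<Sum>j<n. st (u i) * x i j * v j) | u v.
        norm (\<Sum>i<n. st (u i) * u i) \<le> 1 \<and> norm (\<Sum>j<n. st (v j) * v j) \<le> 1}"

section \<open>Operator *-algebras sitting densely inside their C*-completion\<close>

record 'a opalg =
  asc :: "complex \<Rightarrow> 'a \<Rightarrow> 'a"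
  ast :: "'a \<Rightarrow> 'a"
  acar :: "'a set"
  amn :: "nat \<Rightarrow> (nat \<Rightarrow> nat \<Rightarrow> 'a) \<Rightarrow> real"

definition lev1 :: "(nat \<Rightarrow> (nat \<Rightarrow> nat \<Rightarrow> 'v) \<Rightarrow> real) \<Rightarrow> 'v \<Rightarrow> real" where
  "lev1 mn x = mn 1 (\<lambda>_ _. x)"

definition op_star_algebra :: "'a::{real_normed_algebra,banach} opalg \<Rightarrow> bool" where
  "op_star_algebra \<A> \<longleftrightarrow>
     cstar_algebra (asc \<A>) (ast \<A>) \<and> sigma_unital (ast \<A>) \<and>
     operator_space (asc \<A>) (acar \<A>) (amn \<A>) \<and>
     closure (acar \<A>) = UNIV \<and>
     (\<forall>x\<in>acar \<A>. \<forall>y\<in>acar \<A>. x * y \<in> acar \<A>) \<and>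
     (\<forall>x\<in>acar \<A>. ast \<A> x \<in> acar \<A>) \<and>
     \<comment> \<open>Banach: complete in the level-1 operator space norm\<close>
     (\<forall>f::nat \<Rightarrow> 'a. (\<forall>k. f k \<in> acar \<A>) \<and>
          (\<forall>\<epsilon>::real>0. \<exists>N::nat. \<forall>p\<ge>N. \<forall>q\<ge>N. lev1 (amn \<A>) (f p - f q) < \<epsilon>) \<longrightarrow>
          (\<exists>x\<in>acar \<A>. \<forall>\<epsilon>::real>0. \<exists>N::nat. \<forall>p\<ge>N. lev1 (amn \<A>) (f p - x) < \<epsilon>)) \<and>
     \<comment> \<open>completely contractive multiplication\<close>
     (\<forall>n\<ge>1. \<forall>x y. matin (acar \<A>) n x \<longrightarrow> matin (acar \<A>) n y \<longrightarrow>
        amn \<A> n (mprod n x y) \<le> amn \<A> n x * amn \<A> n y) \<and>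
     \<comment> \<open>isometric involution at all matrix levels\<close>
     (\<forall>n\<ge>1. \<forall>x. matin (acar \<A>) n x \<longrightarrow> amn \<A> n (\<lambda>i j. ast \<A> (x j i)) = amn \<A> n x) \<and>
     \<comment> \<open>completely bounded inclusion into the C*-completion\<close>
     (\<exists>C::real. \<forall>n::nat\<ge>1. \<forall>x. matin (acar \<A>) n x \<longrightarrow> cmatn (ast \<A>) n x \<le> C * amn \<A> n x)"

record ('a, 'b, 'x) opcorr =
  xsc :: "complex \<Rightarrow> 'x \<Rightarrow> 'x"
  lact :: "'a \<Rightarrow> 'x \<Rightarrow> 'x"
  ract :: "'x \<Rightarrow> 'b \<Rightarrow> 'x"
  ipr :: "'x \<Rightarrow> 'x \<Rightarrow> 'b"
  xcar :: "'x set"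
  xmn :: "nat \<Rightarrow> (nat \<Rightarrow> nat \<Rightarrow> 'x) \<Rightarrow> real"

text \<open>The ambient type 'x is the C*-correspondence X from A to B (with norm ||<x,x>||^(1/2)).\<close>
definition cstar_corr ::
  "'a::{real_normed_algebra,banach} opalg \<Rightarrow> 'b::{real_normed_algebra,banach} opalg
   \<Rightarrow> ('a, 'b, 'x::{real_normed_vector,banach}) opcorr \<Rightarrow> bool" where
  "cstar_corr \<A> \<B> \<X> \<longleftrightarrow>
     (\<forall>r x. xsc \<X> (complex_of_real r) x = r *\<^sub>R x) \<and>
     (\<forall>c d x. xsc \<X> (c + d) x = xsc \<X> c x + xsc \<X> d x) \<and>
     (\<forall>c x y. xsc \<X> c (x + y) = xsc \<X> c x + xsc \<X> c y) \<and>
     (\<forall>c d x. xsc \<X> c (xsc \<X> d x) = xsc \<X> (c * d) x) \<and>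
     \<comment> \<open>right Hilbert B-module\<close>
     (\<forall>x y b. ract \<X> (x + y) b = ract \<X> x b + ract \<X> y b) \<and>
     (\<forall>x b b'. ract \<X> x (b + b') = ract \<X> x b + ract \<X> x b') \<and>
     (\<forall>x b b'. ract \<X> x (b * b') = ract \<X> (ract \<X> x b) b') \<and>
     (\<forall>c x b. ract \<X> (xsc \<X> c x) b = xsc \<X> c (ract \<X> x b) \<and>
              ract \<X> x (asc \<B> c b) = xsc \<X> c (ract \<X> x b)) \<and>
     (\<forall>x y z. ipr \<X> x (y + z) = ipr \<X> x y + ipr \<X> x z) \<and>
     (\<forall>c x y. ipr \<X> x (xsc \<X> c y) = asc \<B> c (ipr \<X> x y)) \<and>
     (\<forall>x y b. ipr \<X> x (ract \<X> y b) = ipr \<X> x y * b) \<and>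
     (\<forall>x y. ipr \<X> y x = ast \<B> (ipr \<X> x y)) \<and>
     (\<forall>x. positive (ast \<B>) (ipr \<X> x x)) \<and>
     (\<forall>x. ipr \<X> x x = 0 \<longrightarrow> x = 0) \<and>
     (\<forall>x. norm x = sqrt (norm (ipr \<X> x x))) \<and>
     \<comment> \<open>left action of A by adjointable operators (a *-homomorphism A -> L(X))\<close>
     (\<forall>a x y. lact \<X> a (x + y) = lact \<X> a x + lact \<X> a y) \<and>
     (\<forall>a a' x. lact \<X> (a + a') x = lact \<X> a x + lact \<X> a' x) \<and>
     (\<forall>c a x. lact \<X> (asc \<A> c a) x = xsc \<X> c (lact \<X> a x) \<and>
              lact \<X> a (xsc \<X> c x) = xsc \<X> c (lact \<X> a x)) \<and>
     (\<forall>a a' x. lact \<X> (a * a') x = lact \<X> a (lact \<X> a' x)) \<and>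
     (\<forall>a x b. lact \<X> a (ract \<X> x b) = ract \<X> (lact \<X> a x) b) \<and>
     (\<forall>a x y. ipr \<X> x (lact \<X> a y) = ipr \<X> (lact \<X> (ast \<A> a) x) y)"

text \<open>Operator *-correspondence: the dense subset xcar (= the operator space \<X>) of X.\<close>
definition op_star_corr ::
  "'a::{real_normed_algebra,banach} opalg \<Rightarrow> 'b::{real_normed_algebra,banach} opalg
   \<Rightarrow> ('a, 'b, 'x::{real_normed_vector,banach}) opcorr \<Rightarrow> bool" where
  "op_star_corr \<A> \<B> \<X> \<longleftrightarrow>
     op_star_algebra \<A> \<and> op_star_algebra \<B> \<and> cstar_corr \<A> \<B> \<X> \<and>
     operator_space (xsc \<X>) (xcar \<X>) (xmn \<X>) \<and>
     closure (xcar \<X>) = UNIV \<and>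
     (\<forall>a\<in>acar \<A>. \<forall>x\<in>xcar \<X>. lact \<X> a x \<in> xcar \<X>) \<and>
     (\<forall>x\<in>xcar \<X>. \<forall>b\<in>acar \<B>. ract \<X> x b \<in> xcar \<X>) \<and>
     (\<forall>x\<in>xcar \<X>. \<forall>y\<in>xcar \<X>. ipr \<X> x y \<in> acar \<B>) \<and>
     \<comment> \<open>completely contractive actions\<close>
     (\<forall>n\<ge>1. \<forall>a x. matin (acar \<A>) n a \<longrightarrow> matin (xcar \<X>) n x \<longrightarrow>
        xmn \<X> n (\<lambda>i j. \<Sum>k<n. lact \<X> (a i k) (x k j)) \<le> amn \<A> n a * xmn \<X> n x) \<and>
     (\<forall>n\<ge>1. \<forall>x b. matin (xcar \<X>) n x \<longrightarrow> matin (acar \<B>) n b \<longrightarrow>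
        xmn \<X> n (\<lambda>i j. \<Sum>k<n. ract \<X> (x i k) (b k j)) \<le> xmn \<X> n x * amn \<B> n b) \<and>
     \<comment> \<open>matrix contractivity of the pairing\<close>
     (\<forall>n\<ge>1. \<forall>x y. matin (xcar \<X>) n x \<longrightarrow> matin (xcar \<X>) n y \<longrightarrow>
        amn \<B> n (\<lambda>i j. \<Sum>k<n. ipr \<X> (x k i) (y k j)) \<le> xmn \<X> n x * xmn \<X> n y) \<and>
     (\<forall>a\<in>acar \<A>. \<forall>x\<in>xcar \<X>.
        norm (ipr \<X> (lact \<X> a x) (lact \<X> a x)) \<le> (norm a)\<^sup>2 * norm (ipr \<X> x x))"

definition countably_generated :: "'b opalg \<Rightarrow> ('a, 'b, 'x::{real_normed_vector}) opcorr \<Rightarrow> bool" where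
  "countably_generated \<B> \<X> \<longleftrightarrow>
     (\<exists>\<eta>::nat \<Rightarrow> 'x. closure (cspan (xsc \<X>) {ract \<X> (\<eta> n) b | n b. b \<in> acar \<B>}) = UNIV)"

text \<open>The finite rows sum_{n<N} xi_n e_{1n} form a Cauchy sequence in l^2(N,\<X>)^t.\<close>
definition row_cauchy :: "('a, 'b, 'x::ab_group_add) opcorr \<Rightarrow> (nat \<Rightarrow> 'x) \<Rightarrow> bool" where
  "row_cauchy \<X> \<xi> \<longleftrightarrow> (\<forall>\<epsilon>>0. \<exists>N0. \<forall>N\<ge>N0. \<forall>N'\<ge>N0.
      xmn \<X> (Suc (max N N'))
        (\<lambda>i j. if i = 0 then (if j < N then \<xi> j else 0) - (if j < N' then \<xi> j else 0) else 0) < \<epsilon>)"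

text \<open>Norm on K_B: sup over n of the M_n(\<B>)-norm of the n x n corner; Cauchy condition for
  the finite matrices sum_{n,m<N} c n m e_{nm}.\<close>
definition KB_cauchy :: "'b::ab_group_add opalg \<Rightarrow> (nat \<Rightarrow> nat \<Rightarrow> 'b) \<Rightarrow> bool" where
  "KB_cauchy \<B> c \<longleftrightarrow> (\<forall>\<epsilon>>0. \<exists>N0. \<forall>N\<ge>N0. \<forall>N'\<ge>N0. \<forall>n\<ge>1.
      amn \<B> n (\<lambda>i j. (if i < N \<and> j < N then c i j else 0) - (if i < N' \<and> j < N' then c i j else 0)) \<le> \<epsilon>)"

definition diff_gen_seq ::
  "'a::{real_normed_algebra,banach} opalg \<Rightarrow> 'b::{real_normed_algebra,banach} opalg
   \<Rightarrow> ('a, 'b, 'x::{real_normed_vector,banach}) opcorr \<Rightarrow> (nat \<Rightarrow> 'x) \<Rightarrow> bool" where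
  "diff_gen_seq \<A> \<B> \<X> \<xi> \<longleftrightarrow>
     closure (cspan (xsc \<X>) {ract \<X> (\<xi> n) b | n b. True}) = UNIV \<and>
     (\<forall>a\<in>acar \<A>. \<forall>l n m. ipr \<X> (\<xi> n) (lact \<X> a (\<xi> m) + xsc \<X> l (\<xi> m)) \<in> acar \<B>) \<and>
     (\<forall>a\<in>acar \<A>. \<forall>l. KB_cauchy \<B> (\<lambda>n m. ipr \<X> (\<xi> n) (lact \<X> a (\<xi> m) + xsc \<X> l (\<xi> m)))) \<and>
     \<comment> \<open>tau : \<A> -> K_B completely bounded; the M_k(K_B) norm of tau_k(a) is the sup over n of the
         M_{kn}(\<B>)-norms of its n x n corners\<close>
     (\<exists>C. \<forall>k\<ge>1. \<forall>a. matin (acar \<A>) k a \<longrightarrow> (\<forall>n\<ge>1.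
        amn \<B> (k * n) (blk k n (\<lambda>p q i j. ipr \<X> (\<xi> i) (lact \<X> (a p q) (\<xi> j)))) \<le> C * amn \<A> k a))"

definition differentiable_corr ::
  "'a::{real_normed_algebra,banach} opalg \<Rightarrow> 'b::{real_normed_algebra,banach} opalg
   \<Rightarrow> ('a, 'b, 'x::{real_normed_vector,banach}) opcorr \<Rightarrow> bool" where
  "differentiable_corr \<A> \<B> \<X> \<longleftrightarrow> (\<exists>\<xi>. diff_gen_seq \<A> \<B> \<X> \<xi>)"

end

(*
  Given generators eta_n, approximate each eta_n by elements zeta_nm of the operator space,
  enumerate the zeta_nm as one sequence and rescale its k-th term to level-one norm at most 2^-k.
  A row is no larger than the sum of the norms of its entries, so the finite rows form a Cauchy
  sequence, and rescaling does not change the closed spans, which still contain every eta_n b.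

  Conversely, the finite rows of a row-Cauchy sequence xi are uniformly bounded. The corner of
  tau_k(a) is the matrix pairing <x, (a (x) 1) x> of a block diagonal copy x of a finite row, so
  complete contractivity of the pairing and of the left action bounds it by the norm of a times
  the square of the row bound. Pairing differences of truncated rows in the same way shows that
  the finite corners of <xi_n, (a + l) xi_m> form a Cauchy sequence in K_B.
*)

theory Submission
  imports Defs
begin

lemma div_mod_in_block:
  fixes i k n :: nat
  assumes "k * n \<le> i" "i < k * n + n"
  shows "i div n = k" "i mod n = i - k * n"
proof -
  show "i div n = k"
    using assms by (intro div_nat_eqI) (simp_all add: ac_simps)
  then show "i mod n = i - k * n"
    using minus_div_mult_eq_mod[of i n] by simp
qed

lemma div_eq_and_mod_0_iff:
  fixes t r n :: nat
  assumes "n \<ge> 1"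
  shows "t div n = r div n \<and> t mod n = 0 \<longleftrightarrow> t = r div n * n"
proof
  assume "t div n = r div n \<and> t mod n = 0"
  then show "t = r div n * n"
    by (metis add_0_right div_mult_mod_eq)
next
  assume "t = r div n * n"
  then show "t div n = r div n \<and> t mod n = 0"
    using assms by simp
qed

lemma sum_eq_single_nonzero:
  assumes "finite A" "a \<in> A" "\<And>x. x \<in> A \<Longrightarrow> x \<noteq> a \<Longrightarrow> f x = 0"
  shows "sum f A = f a"
proof -
  have "sum f A = sum f {a}"
    by (rule sum.mono_neutral_right) (use assms in auto)
  then show ?thesis by simp
qed

lemma sum_tail_half_powers_le:
  "(\<Sum>j<s. if N0 \<le> j then (1/2::real) ^ j else 0) \<le> 2 * (1/2) ^ N0"
proof -
  have "(\<Sum>j<s. if N0 \<le> j then (1/2::real) ^ j else 0) =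
      (if N0 \<le> s then 2 * (1/2) ^ N0 - 2 * (1/2) ^ s else 0)"
  proof (induction s)
    case (Suc s)
    then show ?case
      by (cases "N0 \<le> s"; cases "N0 = Suc s") auto
  qed simp
  then show ?thesis
    by simp
qed

lemma closure_add_mem:
  fixes A :: "'v::real_normed_vector set"
  assumes A: "\<And>x y. x \<in> A \<Longrightarrow> y \<in> A \<Longrightarrow> x + y \<in> A"
    and x: "x \<in> closure A" and y: "y \<in> closure A"
  shows "x + y \<in> closure A"
  unfolding closure_approachable
proof (intro allI impI)
  fix e :: real assume "e > 0"
  then obtain x' y' where "x' \<in> A" "dist x' x < e / 2" "y' \<in> A" "dist y' y < e / 2"
    using x y unfolding closure_approachable by (meson half_gt_zero)
  moreover have "dist (x' + y') (x + y) \<le> dist x' x + dist y' y"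
    by (rule dist_triangle_add)
  ultimately show "\<exists>z\<in>A. dist z (x + y) < e"
    using A by (intro bexI[of _ "x' + y'"]) auto
qed

lemma closure_seq_approximates:
  fixes A :: "'v::metric_space set"
  assumes "x \<in> closure A"
  shows "\<exists>\<zeta> :: nat \<Rightarrow> 'v. (\<forall>m. \<zeta> m \<in> A) \<and> x \<in> closure (range \<zeta>)"
proof -
  obtain \<zeta> :: "nat \<Rightarrow> 'v" where \<zeta>: "\<And>m. \<zeta> m \<in> A" "\<zeta> \<longlonglongrightarrow> x"
    using assms unfolding closure_sequential by metis
  have "x \<in> closure (range \<zeta>)"
    unfolding closure_sequential by (rule exI[of _ \<zeta>]) (simp add: \<zeta>(2))
  with \<zeta>(1) show ?thesis
    by blast
qed

lemma cspan_mono: "S \<subseteq> T \<Longrightarrow> cspan sc S \<subseteq> cspan sc T"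
  unfolding cspan_def by blast

lemma cspan_zero_mem: "0 \<in> cspan sc S"
  unfolding cspan_def by (rule CollectI, rule exI[of _ "{}"]) simp

section \<open>Matrix norms of an operator space\<close>

definition partial_perm_matrix :: "nat \<Rightarrow> nat \<Rightarrow> (nat \<Rightarrow> nat \<Rightarrow> complex) \<Rightarrow> bool" where
  "partial_perm_matrix n m \<alpha> \<longleftrightarrow> (\<forall>i<n. \<forall>k<m. \<alpha> i k = 0 \<or> \<alpha> i k = 1) \<and>
     (\<forall>i<n. \<forall>k<m. \<forall>k'<m. \<alpha> i k = 1 \<longrightarrow> \<alpha> i k' = 1 \<longrightarrow> k = k') \<and>
     (\<forall>i<n. \<forall>i'<n. \<forall>k<m. \<alpha> i k = 1 \<longrightarrow> \<alpha> i' k = 1 \<longrightarrow> i = i')"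

definition row_matrix :: "(nat \<Rightarrow> 'v::zero) \<Rightarrow> nat \<Rightarrow> nat \<Rightarrow> 'v" where
  "row_matrix r = (\<lambda>i j. if i = 0 then r j else 0)"

definition block_diag :: "nat \<Rightarrow> nat \<Rightarrow> (nat \<Rightarrow> nat \<Rightarrow> 'v::zero) \<Rightarrow> nat \<Rightarrow> nat \<Rightarrow> 'v" where
  "block_diag k n X = (\<lambda>r s. if r < k * n \<and> s < k * n \<and> r div n = s div n then X (r mod n) (s mod n) else 0)"

definition seq_trunc :: "nat \<Rightarrow> (nat \<Rightarrow> 'v::zero) \<Rightarrow> nat \<Rightarrow> 'v" where
  "seq_trunc N \<xi> = (\<lambda>j. if j < N then \<xi> j else 0)"

definition spread_matrix :: "nat \<Rightarrow> nat \<Rightarrow> (nat \<Rightarrow> nat \<Rightarrow> 'v::zero) \<Rightarrow> nat \<Rightarrow> nat \<Rightarrow> 'v" where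
  "spread_matrix k n a = (\<lambda>u v. if (u mod n = 0 \<and> u < k * n) \<and> (v mod n = 0 \<and> v < k * n)
     then a (u div n) (v div n) else 0)"

lemma partial_perm_matrix_sum_sq_le:
  assumes "partial_perm_matrix n m \<alpha>"
  shows "(\<Sum>i<n. (cmod (\<Sum>j<m. \<alpha> i j * v j))\<^sup>2) \<le> (\<Sum>j<m. (cmod (v j))\<^sup>2)"
proof -
  have row: "(cmod (\<Sum>j<m. \<alpha> i j * v j))\<^sup>2 = (\<Sum>j<m. Re (\<alpha> i j) * (cmod (v j))\<^sup>2)" if i: "i < n" for i
  proof (cases "\<exists>k<m. \<alpha> i k = 1")
    case True
    then obtain k where k: "k < m" "\<alpha> i k = 1" by blast
    have z: "\<alpha> i j = 0" if "j < m" "j \<noteq> k" for j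
      using assms i k that unfolding partial_perm_matrix_def by metis
    have "(\<Sum>j<m. \<alpha> i j * v j) = \<alpha> i k * v k"
      by (rule sum_eq_single_nonzero) (use k z in auto)
    moreover have "(\<Sum>j<m. Re (\<alpha> i j) * (cmod (v j))\<^sup>2) = Re (\<alpha> i k) * (cmod (v k))\<^sup>2"
      by (rule sum_eq_single_nonzero) (use k z in auto)
    ultimately show ?thesis using k by simp
  next
    case False
    then have "\<alpha> i j = 0" if "j < m" for j
      using assms i that unfolding partial_perm_matrix_def by metis
    then show ?thesis by simp
  qed
  have col: "(\<Sum>i<n. Re (\<alpha> i j)) \<le> 1" if j: "j < m" for j
  proof (cases "\<exists>i<n. \<alpha> i j = 1")
    case True
    then obtain k where k: "k < n" "\<alpha> k j = 1" by blast
    have "\<alpha> i j = 0" if "i < n" "i \<noteq> k" for i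
      using assms j k that unfolding partial_perm_matrix_def by metis
    then have "(\<Sum>i<n. Re (\<alpha> i j)) = Re (\<alpha> k j)"
      by (intro sum_eq_single_nonzero) (use k in auto)
    then show ?thesis using k by simp
  next
    case False
    then have "\<alpha> i j = 0" if "i < n" for i
      using assms j that unfolding partial_perm_matrix_def by metis
    then show ?thesis by simp
  qed
  have "(\<Sum>i<n. (cmod (\<Sum>j<m. \<alpha> i j * v j))\<^sup>2) = (\<Sum>j<m. (\<Sum>i<n. Re (\<alpha> i j)) * (cmod (v j))\<^sup>2)"
    using row by (simp add: sum.swap[of _ "{..<n}"] sum_distrib_right)
  also have "\<dots> \<le> (\<Sum>j<m. (cmod (v j))\<^sup>2)"
    using col mult_right_mono[of _ 1] by (intro sum_mono) fastforce
  finally show ?thesis .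
qed

lemma cmatnorm_partial_perm_matrix:
  assumes "partial_perm_matrix n m \<alpha>"
  shows "cmatnorm n m \<alpha> \<le> 1" "0 \<le> cmatnorm n m \<alpha>"
proof -
  let ?S = "{sqrt (\<Sum>i<n. (cmod (\<Sum>j<m. \<alpha> i j * v j))\<^sup>2) | v. (\<Sum>j<m. (cmod (v j))\<^sup>2) \<le> 1}"
  have zero: "0 \<in> ?S"
    by (rule CollectI, rule exI[of _ "\<lambda>_. 0"]) simp
  have le: "s \<le> 1" if "s \<in> ?S" for s
    using that partial_perm_matrix_sum_sq_le[OF assms] by (force intro: order_trans)
  show "cmatnorm n m \<alpha> \<le> 1"
    unfolding cmatnorm_def using zero le by (intro cSup_least) blast+
  have "bdd_above ?S"
    using le by (intro bdd_aboveI[where M=1]) blast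
  then show "0 \<le> cmatnorm n m \<alpha>"
    unfolding cmatnorm_def using cSup_upper[OF zero] by simp
qed

lemma block_diag_row_matrix:
  assumes "n \<ge> 1"
  shows "block_diag k n (row_matrix \<xi>) t r = (if t < k * n \<and> r < k * n \<and> t = r div n * n then \<xi> (r mod n) else 0)"
  unfolding block_diag_def row_matrix_def using div_eq_and_mod_0_iff[OF assms, of t r] by auto

context
  fixes sc :: "complex \<Rightarrow> 'v::ab_group_add \<Rightarrow> 'v" and V :: "'v set"
    and mn :: "nat \<Rightarrow> (nat \<Rightarrow> nat \<Rightarrow> 'v) \<Rightarrow> real"
  assumes os: "operator_space sc V mn"
begin

lemma operator_space_zero_mem: "0 \<in> V"
  using os unfolding operator_space_def by (elim conjE) blast

lemma operator_space_add_mem: "x \<in> V \<Longrightarrow> y \<in> V \<Longrightarrow> x + y \<in> V"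
  using os unfolding operator_space_def by (elim conjE) blast

lemma operator_space_scale_mem: "x \<in> V \<Longrightarrow> sc c x \<in> V"
  using os unfolding operator_space_def by (elim conjE) blast

lemma operator_space_sum_mem: "finite F \<Longrightarrow> (\<And>t. t \<in> F \<Longrightarrow> f t \<in> V) \<Longrightarrow> sum f F \<in> V"
  by (induction F rule: finite_induct) (auto intro: operator_space_zero_mem operator_space_add_mem)

lemma operator_space_norm_cong:
  assumes "\<And>i j. i < n \<Longrightarrow> j < n \<Longrightarrow> x i j = y i j"
  shows "mn n x = mn n y"
proof -
  have "\<forall>n x y. (\<forall>i<n. \<forall>j<n. x i j = y i j) \<longrightarrow> mn n x = mn n y"
    using os unfolding operator_space_def by (elim conjE) assumption
  with assms show ?thesis by blast
qed

lemma operator_space_matrix_norm_axioms: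
  "\<forall>n\<ge>1. \<forall>x. matin V n x \<longrightarrow>
     0 \<le> mn n x \<and> (mn n x = 0 \<longleftrightarrow> (\<forall>i<n. \<forall>j<n. x i j = 0)) \<and>
     (\<forall>c. mn n (\<lambda>i j. sc c (x i j)) = cmod c * mn n x) \<and>
     (\<forall>y. matin V n y \<longrightarrow> mn n (\<lambda>i j. x i j + y i j) \<le> mn n x + mn n y)"
  using os unfolding operator_space_def by (elim conjE) assumption

lemma operator_space_norm_nonneg: "n \<ge> 1 \<Longrightarrow> matin V n x \<Longrightarrow> 0 \<le> mn n x"
  using operator_space_matrix_norm_axioms by blast

lemma operator_space_norm_eq_0_iff:
  "n \<ge> 1 \<Longrightarrow> matin V n x \<Longrightarrow> mn n x = 0 \<longleftrightarrow> (\<forall>i<n. \<forall>j<n. x i j = 0)"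
  using operator_space_matrix_norm_axioms by blast

lemma operator_space_norm_scale:
  "n \<ge> 1 \<Longrightarrow> matin V n x \<Longrightarrow> mn n (\<lambda>i j. sc c (x i j)) = cmod c * mn n x"
  using operator_space_matrix_norm_axioms by blast

lemma operator_space_norm_triangle:
  "n \<ge> 1 \<Longrightarrow> matin V n x \<Longrightarrow> matin V n y \<Longrightarrow> mn n (\<lambda>i j. x i j + y i j) \<le> mn n x + mn n y"
  using operator_space_matrix_norm_axioms by blast

lemma operator_space_norm_smul_le:
  assumes "n \<ge> 1" "m \<ge> 1" "matin V m x"
  shows "mn n (smul sc m \<alpha> x \<beta>) \<le> cmatnorm n m \<alpha> * mn m x * cmatnorm m n \<beta>"
proof -
  have "\<forall>n\<ge>1. \<forall>m\<ge>1. \<forall>x \<alpha> \<beta>. matin V m x \<longrightarrow>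
          mn n (smul sc m \<alpha> x \<beta>) \<le> cmatnorm n m \<alpha> * mn m x * cmatnorm m n \<beta>"
    using os unfolding operator_space_def by (elim conjE) assumption
  with assms show ?thesis by blast
qed

lemma operator_space_norm_dsum:
  assumes "n \<ge> 1" "m \<ge> 1" "matin V n x" "matin V m y"
  shows "mn (n + m) (dsum n x y) = max (mn n x) (mn m y)"
proof -
  have "\<forall>n\<ge>1. \<forall>m\<ge>1. \<forall>x y. matin V n x \<longrightarrow> matin V m y \<longrightarrow>
          mn (n + m) (dsum n x y) = max (mn n x) (mn m y)"
    using os unfolding operator_space_def by (elim conjE) assumption
  with assms show ?thesis by blast
qed

lemma operator_space_norm_zero: "n \<ge> 1 \<Longrightarrow> mn n (\<lambda>_ _. 0) = 0"
  using operator_space_norm_eq_0_iff[of n "\<lambda>_ _. 0"] operator_space_zero_mem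
  by (simp add: matin_def)

lemma operator_space_norm_sum_le:
  assumes n: "n \<ge> 1" and F: "finite F" and M: "\<And>t. t \<in> F \<Longrightarrow> matin V n (M t)"
  shows "mn n (\<lambda>i j. \<Sum>t\<in>F. M t i j) \<le> (\<Sum>t\<in>F. mn n (M t))"
  using F M
proof (induction F rule: finite_induct)
  case empty
  show ?case using operator_space_norm_zero[OF n] by simp
next
  case (insert t F)
  have "matin V n (\<lambda>i j. \<Sum>t\<in>F. M t i j)"
    using insert.prems insert.hyps(1)
    by (auto simp: matin_def intro!: operator_space_sum_mem)
  then have "mn n (\<lambda>i j. \<Sum>t\<in>insert t F. M t i j) \<le> mn n (M t) + mn n (\<lambda>i j. \<Sum>t\<in>F. M t i j)"
    using operator_space_norm_triangle[OF n] insert.prems insert.hyps by simp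
  also have "\<dots> \<le> (\<Sum>t\<in>insert t F. mn n (M t))"
    using insert by simp
  finally show ?case .
qed

lemma matin_row_matrix: "(\<And>j. j < n \<Longrightarrow> r j \<in> V) \<Longrightarrow> matin V n (row_matrix r)"
  unfolding matin_def row_matrix_def using operator_space_zero_mem by auto

lemma matin_block_diag:
  assumes "matin V n X"
  shows "matin V (k * n) (block_diag k n X)"
  unfolding matin_def
proof (intro allI impI)
  fix i j assume "i < k * n" "j < k * n"
  then have "0 < n" by (cases n) auto
  then show "block_diag k n X i j \<in> V"
    using assms operator_space_zero_mem unfolding matin_def block_diag_def by simp
qed

lemma matin_spread_matrix: "matin V k a \<Longrightarrow> matin V (k * n) (spread_matrix k n a)"
  unfolding matin_def spread_matrix_def using operator_space_zero_mem less_mult_imp_div_less by simp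

lemma block_diag_norm:
  assumes n: "n \<ge> 1" and X: "matin V n X" and k: "k \<ge> 1"
  shows "mn (k * n) (block_diag k n X) = mn n X"
  using k
proof (induction k rule: dec_induct)
  case base
  have "mn n (block_diag 1 n X) = mn n X"
    by (rule operator_space_norm_cong) (auto simp: block_diag_def)
  then show ?case by simp
next
  case (step k)
  have "mn (k * n + n) (block_diag (Suc k) n X) = mn (k * n + n) (dsum (k * n) (block_diag k n X) X)"
  proof (rule operator_space_norm_cong)
    fix i j assume "i < k * n + n" "j < k * n + n"
    then show "block_diag (Suc k) n X i j = dsum (k * n) (block_diag k n X) X i j"
      using n div_mod_in_block[of k n i] div_mod_in_block[of k n j] less_mult_imp_div_less[of i k n]
        less_mult_imp_div_less[of j k n]
      by (auto simp: block_diag_def dsum_def)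
  qed
  also have "\<dots> = max (mn (k * n) (block_diag k n X)) (mn n X)"
    using step.hyps n by (intro operator_space_norm_dsum matin_block_diag X) simp_all
  also have "\<dots> = mn n X"
    using step.IH by simp
  finally show ?case
    by (simp add: add.commute)
qed

context
  assumes sc_0: "\<And>x. sc 0 x = 0" and sc_1: "\<And>x. sc 1 x = x"
begin

text \<open>A submatrix with injectively selected rows and columns, padded by zeros, is the product
  of the matrix with two partial permutation matrices, whose operator norms are at most one.\<close>

lemma operator_space_norm_compress_le:
  assumes n: "n \<ge> 1" and m: "m \<ge> 1" and x: "matin V m x"
    and f: "\<And>i. i < n \<Longrightarrow> P i \<Longrightarrow> f i < m"
    and f_inj: "\<And>i i'. i < n \<Longrightarrow> i' < n \<Longrightarrow> P i \<Longrightarrow> P i' \<Longrightarrow> f i = f i' \<Longrightarrow> i = i'"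
    and g: "\<And>j. j < n \<Longrightarrow> Q j \<Longrightarrow> g j < m"
    and g_inj: "\<And>j j'. j < n \<Longrightarrow> j' < n \<Longrightarrow> Q j \<Longrightarrow> Q j' \<Longrightarrow> g j = g j' \<Longrightarrow> j = j'"
  shows "mn n (\<lambda>i j. if P i \<and> Q j then x (f i) (g j) else 0) \<le> mn m x"
proof -
  define \<alpha> where "\<alpha> = (\<lambda>i k. if P i \<and> k = f i then (1::complex) else 0)"
  define \<beta> where "\<beta> = (\<lambda>l j. if Q j \<and> l = g j then (1::complex) else 0)"
  have "partial_perm_matrix n m \<alpha>"
    unfolding partial_perm_matrix_def \<alpha>_def using f_inj by auto
  then have \<alpha>_le: "cmatnorm n m \<alpha> \<le> 1" "0 \<le> cmatnorm n m \<alpha>"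
    by (rule cmatnorm_partial_perm_matrix)+
  have "partial_perm_matrix m n \<beta>"
    unfolding partial_perm_matrix_def \<beta>_def using g_inj by auto
  then have \<beta>_le: "cmatnorm m n \<beta> \<le> 1" "0 \<le> cmatnorm m n \<beta>"
    by (rule cmatnorm_partial_perm_matrix)+
  have "smul sc m \<alpha> x \<beta> i j = (if P i \<and> Q j then x (f i) (g j) else 0)"
    if "i < n" "j < n" for i j
  proof -
    have sc_indicator: "sc (if b then 1 else 0) v = (if b then v else 0)" for b v
      by (simp add: sc_0 sc_1)
    have "(\<Sum>l<m. sc (\<alpha> i k * \<beta> l j) (x k l)) = (if k = f i \<and> P i \<and> Q j then x k (g j) else 0)" for k
      using g that by (cases "k = f i \<and> P i \<and> Q j") (auto simp: \<alpha>_def \<beta>_def sc_0 sc_1 sc_indicator)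
    then show ?thesis
      using f that by (cases "P i \<and> Q j") (auto simp: smul_def)
  qed
  then have "mn n (\<lambda>i j. if P i \<and> Q j then x (f i) (g j) else 0) = mn n (smul sc m \<alpha> x \<beta>)"
    by (intro operator_space_norm_cong) simp
  also have "\<dots> \<le> cmatnorm n m \<alpha> * mn m x * cmatnorm m n \<beta>"
    by (rule operator_space_norm_smul_le[OF n m x])
  also have "\<dots> \<le> 1 * mn m x * 1"
    using \<alpha>_le \<beta>_le operator_space_norm_nonneg[OF m x]
    by (intro mult_mono) (auto intro: mult_le_one)
  finally show ?thesis by simp
qed

lemma row_matrix_norm_le:
  assumes s: "s \<ge> 1" and s': "s' \<ge> 1" and r: "\<And>j. j < s' \<Longrightarrow> r j \<in> V"
    and r'_entries: "\<And>j. j < s \<Longrightarrow> r' j = r j \<or> r' j = 0"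
    and r'_support: "\<And>j. j < s \<Longrightarrow> s' \<le> j \<Longrightarrow> r' j = 0"
  shows "mn s (row_matrix r') \<le> mn s' (row_matrix r)"
proof -
  have "mn s (row_matrix r') =
      mn s (\<lambda>i j. if i < s' \<and> (j < s' \<and> r' j = r j) then row_matrix r (id i) (id j) else 0)"
  proof (rule operator_space_norm_cong)
    fix i j assume "i < s" "j < s"
    then show "row_matrix r' i j = (if i < s' \<and> (j < s' \<and> r' j = r j) then row_matrix r (id i) (id j) else 0)"
      using r'_entries[of j] r'_support[of j] s' unfolding row_matrix_def by (cases "j < s'") auto
  qed
  also have "\<dots> \<le> mn s' (row_matrix r)"
    by (rule operator_space_norm_compress_le[OF s s' matin_row_matrix[OF r]]) auto
  finally show ?thesis .
qed

lemma row_matrix_single_norm_le: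
  assumes s: "s \<ge> 1" and k: "k < s" and v: "v \<in> V"
  shows "mn s (row_matrix (\<lambda>j. if j = k then v else 0)) \<le> lev1 mn v"
proof -
  have "mn s (row_matrix (\<lambda>j. if j = k then v else 0)) =
        mn s (\<lambda>i j. if i = 0 \<and> j = k then (\<lambda>_ _. v) ((\<lambda>_. 0::nat) i) ((\<lambda>_. 0::nat) j) else 0)"
    by (rule operator_space_norm_cong) (auto simp: row_matrix_def)
  also have "\<dots> \<le> mn 1 (\<lambda>_ _. v)"
    by (rule operator_space_norm_compress_le[OF s]) (auto simp: matin_def v)
  finally show ?thesis
    unfolding lev1_def .
qed

lemma row_matrix_norm_le_sum:
  assumes s: "s \<ge> 1" and r: "\<And>j. j < s \<Longrightarrow> r j \<in> V"
  shows "mn s (row_matrix r) \<le> (\<Sum>k<s. lev1 mn (r k))"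
proof -
  have "mn s (row_matrix r) = mn s (\<lambda>i j. \<Sum>k<s. row_matrix (\<lambda>j. if j = k then r k else 0) i j)"
    by (rule operator_space_norm_cong) (simp add: row_matrix_def sum.delta')
  also have "\<dots> \<le> (\<Sum>k<s. mn s (row_matrix (\<lambda>j. if j = k then r k else 0)))"
    by (rule operator_space_norm_sum_le[OF s])
      (auto intro!: matin_row_matrix operator_space_zero_mem r)
  also have "\<dots> \<le> (\<Sum>k<s. lev1 mn (r k))"
    by (rule sum_mono) (auto intro!: row_matrix_single_norm_le[OF s] r)
  finally show ?thesis .
qed

lemma spread_matrix_norm_le:
  assumes k: "k \<ge> 1" and n: "n \<ge> 1" and a: "matin V k a"
  shows "mn (k * n) (spread_matrix k n a) \<le> mn k a"
  unfolding spread_matrix_def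
proof (rule operator_space_norm_compress_le[OF _ k a])
  show "1 \<le> k * n" using k n by simp
  show "i div n < k" if "i < k * n" for i
    using that less_mult_imp_div_less by blast
  show "i = i'" if "i mod n = 0 \<and> i < k * n" "i' mod n = 0 \<and> i' < k * n" "i div n = i' div n"
    for i i'
    using that by (metis div_mult_mod_eq)
qed (auto simp: less_mult_imp_div_less)

end

end

locale op_star_correspondence =
  fixes \<A> :: "'a::{real_normed_algebra,banach} opalg"
    and \<B> :: "'b::{real_normed_algebra,banach} opalg"
    and \<X> :: "('a, 'b, 'x::{real_normed_vector,banach}) opcorr"
  assumes op_star_corr: "op_star_corr \<A> \<B> \<X>"
begin

lemma op_star_algebra_A: "op_star_algebra \<A>"
  using op_star_corr unfolding op_star_corr_def by (elim conjE)

lemma op_star_algebra_B: "op_star_algebra \<B>"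
  using op_star_corr unfolding op_star_corr_def by (elim conjE)

lemma cstar_corr: "cstar_corr \<A> \<B> \<X>"
  using op_star_corr unfolding op_star_corr_def by (elim conjE)

lemma os_A: "operator_space (asc \<A>) (acar \<A>) (amn \<A>)"
  using op_star_algebra_A unfolding op_star_algebra_def by (elim conjE)

lemma os_B: "operator_space (asc \<B>) (acar \<B>) (amn \<B>)"
  using op_star_algebra_B unfolding op_star_algebra_def by (elim conjE)

lemma os_X: "operator_space (xsc \<X>) (xcar \<X>) (xmn \<X>)"
  using op_star_corr unfolding op_star_corr_def by (elim conjE)

lemma closure_xcar: "closure (xcar \<X>) = UNIV"
  using op_star_corr unfolding op_star_corr_def by (elim conjE)

lemma lact_mem: "a \<in> acar \<A> \<Longrightarrow> x \<in> xcar \<X> \<Longrightarrow> lact \<X> a x \<in> xcar \<X>"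
  using op_star_corr unfolding op_star_corr_def by (elim conjE) blast

lemma ipr_mem: "x \<in> xcar \<X> \<Longrightarrow> y \<in> xcar \<X> \<Longrightarrow> ipr \<X> x y \<in> acar \<B>"
  using op_star_corr unfolding op_star_corr_def by (elim conjE) blast

lemma lact_matrix_norm_le:
  "n \<ge> 1 \<Longrightarrow> matin (acar \<A>) n a \<Longrightarrow> matin (xcar \<X>) n x \<Longrightarrow>
     xmn \<X> n (\<lambda>i j. \<Sum>k<n. lact \<X> (a i k) (x k j)) \<le> amn \<A> n a * xmn \<X> n x"
  using op_star_corr unfolding op_star_corr_def by (elim conjE) blast

lemma ipr_matrix_norm_le:
  "n \<ge> 1 \<Longrightarrow> matin (xcar \<X>) n x \<Longrightarrow> matin (xcar \<X>) n y \<Longrightarrow>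
     amn \<B> n (\<lambda>i j. \<Sum>k<n. ipr \<X> (x k i) (y k j)) \<le> xmn \<X> n x * xmn \<X> n y"
  using op_star_corr unfolding op_star_corr_def by (elim conjE) blast

lemma asc_A_of_real: "asc \<A> (complex_of_real r) a = r *\<^sub>R a"
  using op_star_algebra_A unfolding op_star_algebra_def cstar_algebra_def by (elim conjE allE) assumption

lemma ast_B_add: "ast \<B> (b + b') = ast \<B> b + ast \<B> b'"
  using op_star_algebra_B unfolding op_star_algebra_def cstar_algebra_def by (elim conjE allE) assumption

lemma ast_B_mult: "ast \<B> (b * b') = ast \<B> b' * ast \<B> b"
  using op_star_algebra_B unfolding op_star_algebra_def cstar_algebra_def by (elim conjE allE) assumption

lemma xsc_of_real: "xsc \<X> (complex_of_real r) x = r *\<^sub>R x"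
  using cstar_corr unfolding cstar_corr_def by (elim conjE allE) assumption

lemma xsc_add_left: "xsc \<X> (c + d) x = xsc \<X> c x + xsc \<X> d x"
  using cstar_corr unfolding cstar_corr_def by (elim conjE allE) assumption

lemma xsc_add_right: "xsc \<X> c (x + y) = xsc \<X> c x + xsc \<X> c y"
  using cstar_corr unfolding cstar_corr_def by (elim conjE allE) assumption

lemma ract_add_left: "ract \<X> (x + y) b = ract \<X> x b + ract \<X> y b"
  using cstar_corr unfolding cstar_corr_def by (elim conjE allE) assumption

lemma ract_xsc: "ract \<X> (xsc \<X> c x) b = xsc \<X> c (ract \<X> x b)"
  using cstar_corr unfolding cstar_corr_def by (elim conjE allE) assumption

lemma ract_asc: "ract \<X> x (asc \<B> c b) = xsc \<X> c (ract \<X> x b)"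
  using cstar_corr unfolding cstar_corr_def by (elim conjE allE) assumption

lemma ipr_add_right: "ipr \<X> x (y + z) = ipr \<X> x y + ipr \<X> x z"
  using cstar_corr unfolding cstar_corr_def by (elim conjE allE) assumption

lemma ipr_ract: "ipr \<X> x (ract \<X> y b) = ipr \<X> x y * b"
  using cstar_corr unfolding cstar_corr_def by (elim conjE allE) assumption

lemma ipr_commute: "ipr \<X> y x = ast \<B> (ipr \<X> x y)"
  using cstar_corr unfolding cstar_corr_def by (elim conjE allE) assumption

lemma norm_eq_sqrt_ipr: "norm x = sqrt (norm (ipr \<X> x x))"
  using cstar_corr unfolding cstar_corr_def by (elim conjE allE) assumption

lemma lact_add_right: "lact \<X> a (x + y) = lact \<X> a x + lact \<X> a y"
  using cstar_corr unfolding cstar_corr_def by (elim conjE allE) assumption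

lemma lact_add_left: "lact \<X> (a + a') x = lact \<X> a x + lact \<X> a' x"
  using cstar_corr unfolding cstar_corr_def by (elim conjE allE) assumption

lemma asc_A_0: "asc \<A> 0 a = 0"
  using asc_A_of_real[of 0] by simp

lemma asc_A_1: "asc \<A> 1 a = a"
  using asc_A_of_real[of 1] by simp

lemma xsc_0: "xsc \<X> 0 x = 0"
  using xsc_of_real[of 0] by simp

lemma xsc_1: "xsc \<X> 1 x = x"
  using xsc_of_real[of 1] by simp

lemma xsc_minus_1: "xsc \<X> (- 1) x = - x"
  using xsc_of_real[of "- 1"] by simp

lemma lact_zero_right: "lact \<X> a 0 = 0"
  by (rule additive.zero[OF additive.intro]) (rule lact_add_right)

lemma lact_zero_left: "lact \<X> 0 x = 0"
  by (rule additive.zero[OF additive.intro[of "\<lambda>a. lact \<X> a x"]]) (rule lact_add_left)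

lemma lact_diff_right: "lact \<X> a (x - y) = lact \<X> a x - lact \<X> a y"
  by (rule additive.diff[OF additive.intro]) (rule lact_add_right)

lemma xsc_zero_right: "xsc \<X> c 0 = 0"
  by (rule additive.zero[OF additive.intro]) (rule xsc_add_right)

lemma xsc_diff_right: "xsc \<X> c (x - y) = xsc \<X> c x - xsc \<X> c y"
  by (rule additive.diff[OF additive.intro]) (rule xsc_add_right)

lemma ract_diff_left: "ract \<X> (x - y) b = ract \<X> x b - ract \<X> y b"
  by (rule additive.diff[OF additive.intro[of "\<lambda>x. ract \<X> x b"]]) (rule ract_add_left)

lemma ipr_zero_right: "ipr \<X> x 0 = 0"
  by (rule additive.zero[OF additive.intro]) (rule ipr_add_right)

lemma ipr_diff_right: "ipr \<X> x (y - z) = ipr \<X> x y - ipr \<X> x z"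
  by (rule additive.diff[OF additive.intro]) (rule ipr_add_right)

lemma ipr_zero_left: "ipr \<X> 0 y = 0"
proof -
  have "ast \<B> 0 = 0"
    by (rule additive.zero[OF additive.intro]) (rule ast_B_add)
  then show ?thesis
    using ipr_commute[of 0 y] by (simp add: ipr_zero_right)
qed

lemma ipr_diff_left: "ipr \<X> (x - y) z = ipr \<X> x z - ipr \<X> y z"
proof -
  have "ast \<B> (b - b') = ast \<B> b - ast \<B> b'" for b b'
    by (rule additive.diff[OF additive.intro]) (rule ast_B_add)
  then show ?thesis
    by (metis ipr_commute ipr_diff_right)
qed

lemma xcar_diff_mem:
  assumes "x \<in> xcar \<X>" "y \<in> xcar \<X>"
  shows "x - y \<in> xcar \<X>"
proof -
  have "x + xsc \<X> (- 1) y \<in> xcar \<X>"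
    using assms by (intro operator_space_add_mem[OF os_X] operator_space_scale_mem[OF os_X])
  then show ?thesis
    by (simp add: xsc_minus_1)
qed

text \<open>From \<open>\<langle>xb, xb\<rangle> = b\<^sup>* \<langle>x, x\<rangle> b\<close>.\<close>

lemma norm_ract_le: "norm (ract \<X> x b) \<le> sqrt (norm (ast \<B> b) * norm b) * norm x"
proof -
  have self_adjoint: "ast \<B> (ipr \<X> x x) = ipr \<X> x x"
    using ipr_commute[of x x] by simp
  have "ipr \<X> (ract \<X> x b) (ract \<X> x b) = ipr \<X> (ract \<X> x b) x * b"
    by (rule ipr_ract)
  also have "ipr \<X> (ract \<X> x b) x = ast \<B> (ipr \<X> x x * b)"
    by (subst ipr_commute) (simp only: ipr_ract)
  also have "\<dots> = ast \<B> b * ipr \<X> x x"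
    by (simp only: ast_B_mult self_adjoint)
  finally have "norm (ract \<X> x b) = sqrt (norm (ast \<B> b * ipr \<X> x x * b))"
    by (simp add: norm_eq_sqrt_ipr[of "ract \<X> x b"])
  also have "\<dots> \<le> sqrt (norm (ast \<B> b) * norm (ipr \<X> x x) * norm b)"
    by (intro real_sqrt_le_mono order.trans[OF norm_mult_ineq] mult_right_mono norm_mult_ineq) simp
  also have "norm (ipr \<X> x x) = (norm x)\<^sup>2"
    by (simp add: norm_eq_sqrt_ipr[of x])
  also have "sqrt (norm (ast \<B> b) * (norm x)\<^sup>2 * norm b) = sqrt (norm (ast \<B> b) * norm b) * norm x"
    by (simp add: real_sqrt_mult ac_simps)
  finally show ?thesis .
qed

abbreviation row_norm :: "nat \<Rightarrow> (nat \<Rightarrow> 'x) \<Rightarrow> real" where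
  "row_norm n u \<equiv> xmn \<X> n (row_matrix u)"

lemmas row_norm_le = row_matrix_norm_le[OF os_X xsc_0 xsc_1]

lemma row_norm_nonneg: "n \<ge> 1 \<Longrightarrow> (\<And>j. j < n \<Longrightarrow> u j \<in> xcar \<X>) \<Longrightarrow> 0 \<le> row_norm n u"
  by (intro operator_space_norm_nonneg[OF os_X] matin_row_matrix[OF os_X])

lemma ipr_row_norm_le:
  assumes n: "n \<ge> 1" and u: "\<And>j. j < n \<Longrightarrow> u j \<in> xcar \<X>" and w: "\<And>j. j < n \<Longrightarrow> w j \<in> xcar \<X>"
  shows "amn \<B> n (\<lambda>i j. ipr \<X> (u i) (w j)) \<le> row_norm n u * row_norm n w"
proof -
  have "amn \<B> n (\<lambda>i j. ipr \<X> (u i) (w j)) =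
      amn \<B> n (\<lambda>i j. \<Sum>k<n. ipr \<X> (row_matrix u k i) (row_matrix w k j))"
  proof (rule operator_space_norm_cong[OF os_B])
    fix i j assume "i < n" "j < n"
    show "ipr \<X> (u i) (w j) = (\<Sum>k<n. ipr \<X> (row_matrix u k i) (row_matrix w k j))"
      using n by (subst sum_eq_single_nonzero[where a=0]) (auto simp: row_matrix_def ipr_zero_left)
  qed
  also have "\<dots> \<le> row_norm n u * row_norm n w"
    using n u w by (intro ipr_matrix_norm_le matin_row_matrix[OF os_X])
  finally show ?thesis .
qed

lemma row_norm_add_le:
  assumes n: "n \<ge> 1" and u: "\<And>j. j < n \<Longrightarrow> u j \<in> xcar \<X>" and w: "\<And>j. j < n \<Longrightarrow> w j \<in> xcar \<X>"
  shows "row_norm n (\<lambda>j. u j + w j) \<le> row_norm n u + row_norm n w"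
proof -
  have "row_norm n (\<lambda>j. u j + w j) = xmn \<X> n (\<lambda>i j. row_matrix u i j + row_matrix w i j)"
    by (rule operator_space_norm_cong[OF os_X]) (simp add: row_matrix_def)
  also have "\<dots> \<le> row_norm n u + row_norm n w"
    using n u w by (intro operator_space_norm_triangle[OF os_X] matin_row_matrix[OF os_X])
  finally show ?thesis .
qed

lemma row_norm_scale:
  assumes n: "n \<ge> 1" and u: "\<And>j. j < n \<Longrightarrow> u j \<in> xcar \<X>"
  shows "row_norm n (\<lambda>j. xsc \<X> c (u j)) = cmod c * row_norm n u"
proof -
  have "row_norm n (\<lambda>j. xsc \<X> c (u j)) = xmn \<X> n (\<lambda>i j. xsc \<X> c (row_matrix u i j))"
    by (rule operator_space_norm_cong[OF os_X]) (simp add: row_matrix_def xsc_zero_right)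
  also have "\<dots> = cmod c * row_norm n u"
    using n u by (intro operator_space_norm_scale[OF os_X] matin_row_matrix[OF os_X])
  finally show ?thesis .
qed

lemma row_norm_lact_le:
  assumes n: "n \<ge> 1" and u: "\<And>j. j < n \<Longrightarrow> u j \<in> xcar \<X>" and a: "a \<in> acar \<A>"
  shows "row_norm n (\<lambda>j. lact \<X> a (u j)) \<le> lev1 (amn \<A>) a * row_norm n u"
proof -
  define a' where "a' = (\<lambda>(i::nat) (k::nat). if i = 0 \<and> k = 0 then a else 0)"
  have a': "matin (acar \<A>) n a'"
    unfolding a'_def matin_def using a operator_space_zero_mem[OF os_A] by auto
  have "row_norm n (\<lambda>j. lact \<X> a (u j)) = xmn \<X> n (\<lambda>i j. \<Sum>k<n. lact \<X> (a' i k) (row_matrix u k j))"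
  proof (rule operator_space_norm_cong[OF os_X])
    fix i j assume "i < n" "j < n"
    show "row_matrix (\<lambda>j. lact \<X> a (u j)) i j = (\<Sum>k<n. lact \<X> (a' i k) (row_matrix u k j))"
      using n by (subst sum_eq_single_nonzero[where a=0])
        (auto simp: row_matrix_def a'_def lact_zero_left lact_zero_right)
  qed
  also have "\<dots> \<le> amn \<A> n a' * row_norm n u"
    using n u a' by (intro lact_matrix_norm_le matin_row_matrix[OF os_X])
  also have "\<dots> \<le> lev1 (amn \<A>) a * row_norm n u"
  proof (rule mult_right_mono)
    have "amn \<A> n a' = amn \<A> n (\<lambda>i k. if i = 0 \<and> k = 0 then (\<lambda>_ _. a) ((\<lambda>_. 0::nat) i) ((\<lambda>_. 0::nat) k) else 0)"
      unfolding a'_def ..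
    also have "\<dots> \<le> lev1 (amn \<A>) a"
      unfolding lev1_def using n a
      by (intro operator_space_norm_compress_le[OF os_A asc_A_0 asc_A_1]) (auto simp: matin_def)
    finally show "amn \<A> n a' \<le> lev1 (amn \<A>) a" .
    show "0 \<le> row_norm n u"
      by (rule row_norm_nonneg[OF n u])
  qed
  finally show ?thesis .
qed

lemma row_norm_lact_plus_scale_le:
  assumes n: "n \<ge> 1" and u: "\<And>j. j < n \<Longrightarrow> u j \<in> xcar \<X>" and a: "a \<in> acar \<A>"
  shows "row_norm n (\<lambda>j. lact \<X> a (u j) + xsc \<X> l (u j)) \<le> (lev1 (amn \<A>) a + cmod l) * row_norm n u"
proof -
  have "row_norm n (\<lambda>j. lact \<X> a (u j) + xsc \<X> l (u j))
      \<le> row_norm n (\<lambda>j. lact \<X> a (u j)) + row_norm n (\<lambda>j. xsc \<X> l (u j))"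
    using u a by (intro row_norm_add_le[OF n] lact_mem operator_space_scale_mem[OF os_X])
  also have "\<dots> \<le> lev1 (amn \<A>) a * row_norm n u + cmod l * row_norm n u"
    using row_norm_lact_le[of n u a] row_norm_scale[of n u l] n u a by simp
  finally show ?thesis
    by (simp add: algebra_simps)
qed

lemma ipr_row_norm_diff_le:
  assumes n: "n \<ge> 1"
    and mem: "\<And>j. j < n \<Longrightarrow> u j \<in> xcar \<X> \<and> u' j \<in> xcar \<X> \<and> v j \<in> xcar \<X> \<and> v' j \<in> xcar \<X>"
  shows "amn \<B> n (\<lambda>i j. ipr \<X> (u i) (v j) - ipr \<X> (u' i) (v' j))
    \<le> row_norm n (\<lambda>j. u j - u' j) * row_norm n v + row_norm n u' * row_norm n (\<lambda>j. v j - v' j)"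
proof -
  have "ipr \<X> (u i) (v j) - ipr \<X> (u' i) (v' j) = ipr \<X> (u i - u' i) (v j) + ipr \<X> (u' i) (v j - v' j)"
    for i j
    by (simp add: ipr_diff_left ipr_diff_right)
  then have "amn \<B> n (\<lambda>i j. ipr \<X> (u i) (v j) - ipr \<X> (u' i) (v' j)) =
      amn \<B> n (\<lambda>i j. ipr \<X> (u i - u' i) (v j) + ipr \<X> (u' i) (v j - v' j))"
    by simp
  also have "\<dots> \<le> amn \<B> n (\<lambda>i j. ipr \<X> (u i - u' i) (v j)) + amn \<B> n (\<lambda>i j. ipr \<X> (u' i) (v j - v' j))"
    using mem xcar_diff_mem
    by (intro operator_space_norm_triangle[OF os_B n]) (auto simp: matin_def intro!: ipr_mem)
  also have "\<dots> \<le> row_norm n (\<lambda>j. u j - u' j) * row_norm n v + row_norm n u' * row_norm n (\<lambda>j. v j - v' j)"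
    using mem xcar_diff_mem by (intro add_mono ipr_row_norm_le[OF n]) auto
  finally show ?thesis .
qed

lemma seq_trunc_mem: "(\<And>n. \<xi> n \<in> xcar \<X>) \<Longrightarrow> seq_trunc N \<xi> j \<in> xcar \<X>"
  unfolding seq_trunc_def using operator_space_zero_mem[OF os_X] by simp

lemma row_cauchy_iff:
  "row_cauchy \<X> \<xi> \<longleftrightarrow> (\<forall>\<epsilon>>0. \<exists>N0. \<forall>N\<ge>N0. \<forall>N'\<ge>N0.
     row_norm (Suc (max N N')) (\<lambda>j. seq_trunc N \<xi> j - seq_trunc N' \<xi> j) < \<epsilon>)"
  unfolding row_cauchy_def row_matrix_def seq_trunc_def ..

lemma row_cauchy_bounded:
  assumes \<xi>: "\<And>n. \<xi> n \<in> xcar \<X>" and "row_cauchy \<X> \<xi>"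
  obtains Bd where "\<And>n N. n \<ge> 1 \<Longrightarrow> row_norm n (seq_trunc N \<xi>) \<le> Bd"
proof -
  obtain N0 where N0: "\<And>N N'. N \<ge> N0 \<Longrightarrow> N' \<ge> N0 \<Longrightarrow>
      row_norm (Suc (max N N')) (\<lambda>j. seq_trunc N \<xi> j - seq_trunc N' \<xi> j) < 1"
    using \<open>row_cauchy \<X> \<xi>\<close> unfolding row_cauchy_iff by (meson zero_less_one)
  have mem: "\<And>N j. seq_trunc N \<xi> j \<in> xcar \<X>"
    by (rule seq_trunc_mem[OF \<xi>])
  define \<rho> where "\<rho> M = row_norm (Suc M) (seq_trunc M \<xi>)" for M
  have "\<rho> M \<le> 1 + \<rho> N0" if M: "M \<ge> N0" for M
  proof -
    have "\<rho> M = row_norm (Suc M) (\<lambda>j. (seq_trunc M \<xi> j - seq_trunc N0 \<xi> j) + seq_trunc N0 \<xi> j)"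
      unfolding \<rho>_def by simp
    also have "\<dots> \<le> row_norm (Suc M) (\<lambda>j. seq_trunc M \<xi> j - seq_trunc N0 \<xi> j) + row_norm (Suc M) (seq_trunc N0 \<xi>)"
      by (rule row_norm_add_le) (auto intro: xcar_diff_mem mem)
    also have "\<dots> \<le> 1 + \<rho> N0"
    proof (rule add_mono)
      show "row_norm (Suc M) (\<lambda>j. seq_trunc M \<xi> j - seq_trunc N0 \<xi> j) \<le> 1"
        using N0[OF M order.refl] M by (simp add: max_def)
      show "row_norm (Suc M) (seq_trunc N0 \<xi>) \<le> \<rho> N0"
        unfolding \<rho>_def using M by (intro row_norm_le) (auto simp: \<xi> operator_space_zero_mem[OF os_X] seq_trunc_def)
    qed
    finally show ?thesis .
  qed
  moreover have "row_norm n (seq_trunc N \<xi>) \<le> \<rho> (max N N0)" if "n \<ge> 1" for n N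
    unfolding \<rho>_def using that by (intro row_norm_le) (auto simp: \<xi> operator_space_zero_mem[OF os_X] seq_trunc_def)
  ultimately have "row_norm n (seq_trunc N \<xi>) \<le> 1 + \<rho> N0" if "n \<ge> 1" for n N
    using that by (meson max.cobounded2 order_trans)
  then show ?thesis
    using that by blast
qed

lemma truncated_pairing_diff_le:
  assumes \<xi>: "\<And>n. \<xi> n \<in> xcar \<X>" and a: "a \<in> acar \<A>" and n: "n \<ge> 1"
    and Bd: "\<And>M. row_norm n (seq_trunc M \<xi>) \<le> Bd"
  shows "amn \<B> n (\<lambda>i j.
      (if i < N \<and> j < N then ipr \<X> (\<xi> i) (lact \<X> a (\<xi> j) + xsc \<X> l (\<xi> j)) else 0) -
      (if i < N' \<and> j < N' then ipr \<X> (\<xi> i) (lact \<X> a (\<xi> j) + xsc \<X> l (\<xi> j)) else 0))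
    \<le> 2 * (lev1 (amn \<A>) a + cmod l) * Bd * row_norm n (\<lambda>j. seq_trunc N \<xi> j - seq_trunc N' \<xi> j)"
proof -
  define K where "K = lev1 (amn \<A>) a + cmod l"
  have "0 \<le> K"
    unfolding K_def lev1_def using a by (simp add: operator_space_norm_nonneg[OF os_A] matin_def)
  have mem: "\<And>M j. seq_trunc M \<xi> j \<in> xcar \<X>"
    by (rule seq_trunc_mem[OF \<xi>])
  have "0 \<le> Bd"
    using Bd[of 0] row_norm_nonneg[OF n, of "seq_trunc 0 \<xi>"] mem by force
  define w where "w M j = lact \<X> a (seq_trunc M \<xi> j) + xsc \<X> l (seq_trunc M \<xi> j)" for M j
  have w_mem: "w M j \<in> xcar \<X>" for M j
    unfolding w_def using a mem
    by (intro operator_space_add_mem[OF os_X] operator_space_scale_mem[OF os_X] lact_mem)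
  have entry: "(if i < M \<and> j < M then ipr \<X> (\<xi> i) (lact \<X> a (\<xi> j) + xsc \<X> l (\<xi> j)) else 0)
      = ipr \<X> (seq_trunc M \<xi> i) (w M j)" for M i j
    unfolding w_def seq_trunc_def
    by (auto simp: ipr_zero_left ipr_zero_right lact_zero_right xsc_zero_right)
  define D where "D j = seq_trunc N \<xi> j - seq_trunc N' \<xi> j" for j
  have D_mem: "D j \<in> xcar \<X>" for j
    unfolding D_def by (rule xcar_diff_mem[OF mem mem])
  have w_diff: "w N j - w N' j = lact \<X> a (D j) + xsc \<X> l (D j)" for j
    unfolding w_def D_def by (simp add: lact_diff_right xsc_diff_right algebra_simps)
  have "amn \<B> n (\<lambda>i j. ipr \<X> (seq_trunc N \<xi> i) (w N j) - ipr \<X> (seq_trunc N' \<xi> i) (w N' j))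
      \<le> row_norm n D * row_norm n (w N) + row_norm n (seq_trunc N' \<xi>) * row_norm n (\<lambda>j. w N j - w N' j)"
    unfolding D_def using mem w_mem by (intro ipr_row_norm_diff_le[OF n]) blast
  also have "\<dots> \<le> row_norm n D * (K * Bd) + Bd * (K * row_norm n D)"
  proof (intro add_mono mult_mono)
    show "row_norm n (w N) \<le> K * Bd"
      using row_norm_lact_plus_scale_le[OF n mem a, where l = l] Bd[of N] \<open>0 \<le> K\<close>
      unfolding w_def K_def by (meson mult_left_mono order_trans)
    show "row_norm n (\<lambda>j. w N j - w N' j) \<le> K * row_norm n D"
      using row_norm_lact_plus_scale_le[OF n D_mem a, where l = l]
      unfolding w_diff K_def .
  qed (use Bd \<open>0 \<le> Bd\<close> row_norm_nonneg[OF n] w_mem D_mem mem xcar_diff_mem in auto)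
  finally show ?thesis
    unfolding entry D_def K_def by (simp add: algebra_simps)
qed

lemma KB_cauchy_pairing:
  assumes \<xi>: "\<And>n. \<xi> n \<in> xcar \<X>" and rc: "row_cauchy \<X> \<xi>" and a: "a \<in> acar \<A>"
  shows "KB_cauchy \<B> (\<lambda>n m. ipr \<X> (\<xi> n) (lact \<X> a (\<xi> m) + xsc \<X> l (\<xi> m)))"
  unfolding KB_cauchy_def
proof (intro allI impI)
  fix \<epsilon> :: real assume "\<epsilon> > 0"
  obtain Bd where Bd: "\<And>n N. n \<ge> 1 \<Longrightarrow> row_norm n (seq_trunc N \<xi>) \<le> Bd"
    using row_cauchy_bounded[OF \<xi> rc] by blast
  have "0 \<le> Bd"
    using Bd[of 1 0] row_norm_nonneg[of 1 "seq_trunc 0 \<xi>"] seq_trunc_mem[OF \<xi>] by force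
  define C where "C = 2 * (lev1 (amn \<A>) a + cmod l) * Bd"
  have "0 \<le> C"
    unfolding C_def lev1_def using a \<open>0 \<le> Bd\<close>
    by (simp add: operator_space_norm_nonneg[OF os_A] matin_def)
  define d where "d = \<epsilon> / (C + 1)"
  have "0 < d" and "(C + 1) * d = \<epsilon>"
    using \<open>\<epsilon> > 0\<close> \<open>0 \<le> C\<close> by (simp_all add: d_def)
  obtain N0 where N0: "\<And>N N'. N \<ge> N0 \<Longrightarrow> N' \<ge> N0 \<Longrightarrow>
      row_norm (Suc (max N N')) (\<lambda>j. seq_trunc N \<xi> j - seq_trunc N' \<xi> j) < d"
    using rc \<open>0 < d\<close> unfolding row_cauchy_iff by meson
  have "amn \<B> n (\<lambda>i j.
      (if i < N \<and> j < N then ipr \<X> (\<xi> i) (lact \<X> a (\<xi> j) + xsc \<X> l (\<xi> j)) else 0) -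
      (if i < N' \<and> j < N' then ipr \<X> (\<xi> i) (lact \<X> a (\<xi> j) + xsc \<X> l (\<xi> j)) else 0)) \<le> \<epsilon>"
    if NN: "N \<ge> N0" "N' \<ge> N0" and n: "n \<ge> 1" for N N' n
  proof -
    have "seq_trunc N \<xi> j - seq_trunc N' \<xi> j \<in> xcar \<X>" for j
      using seq_trunc_mem[OF \<xi>] seq_trunc_mem[OF \<xi>] by (rule xcar_diff_mem)
    then have "row_norm n (\<lambda>j. seq_trunc N \<xi> j - seq_trunc N' \<xi> j)
        \<le> row_norm (Suc (max N N')) (\<lambda>j. seq_trunc N \<xi> j - seq_trunc N' \<xi> j)"
      using n by (intro row_norm_le) (auto simp: seq_trunc_def)
    also have "\<dots> \<le> d"
      using N0[OF NN] by simp
    finally have "C * row_norm n (\<lambda>j. seq_trunc N \<xi> j - seq_trunc N' \<xi> j) \<le> C * d"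
      using \<open>0 \<le> C\<close> by (rule mult_left_mono)
    also have "\<dots> \<le> \<epsilon>"
      using \<open>(C + 1) * d = \<epsilon>\<close> \<open>0 < d\<close> by (simp add: distrib_right)
    finally show ?thesis
      using truncated_pairing_diff_le[OF \<xi> a n Bd[OF n], where N = N and N' = N' and l = l] unfolding C_def by linarith
  qed
  then show "\<exists>N0. \<forall>N\<ge>N0. \<forall>N'\<ge>N0. \<forall>n\<ge>1. amn \<B> n (\<lambda>i j.
      (if i < N \<and> j < N then ipr \<X> (\<xi> i) (lact \<X> a (\<xi> j) + xsc \<X> l (\<xi> j)) else 0) -
      (if i < N' \<and> j < N' then ipr \<X> (\<xi> i) (lact \<X> a (\<xi> j) + xsc \<X> l (\<xi> j)) else 0)) \<le> \<epsilon>"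
    by blast
qed

text \<open>The \<open>kn \<times> kn\<close> corner of \<open>\<tau>\<^sub>k(a)\<close> is the matrix pairing \<open>\<langle>x, (a \<otimes> 1) x\<rangle>\<close>, where \<open>x\<close> is
  the block diagonal matrix with \<open>k\<close> copies of the row \<open>(\<xi>\<^sub>0, \<dots>, \<xi>\<^sub>n\<^sub>-\<^sub>1)\<close>.\<close>

lemma tau_corner_norm_le:
  assumes k: "k \<ge> 1" and n: "n \<ge> 1" and a: "matin (acar \<A>) k a"
    and \<xi>: "\<And>j. j < n \<Longrightarrow> \<xi> j \<in> xcar \<X>"
  shows "amn \<B> (k * n) (blk k n (\<lambda>p q i j. ipr \<X> (\<xi> i) (lact \<X> (a p q) (\<xi> j))))
    \<le> amn \<A> k a * (row_norm n \<xi>)\<^sup>2"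
proof -
  define K where "K = k * n"
  have K: "K \<ge> 1"
    unfolding K_def using k n by simp
  define x where "x = block_diag k n (row_matrix \<xi>)"
  have x_mem: "matin (xcar \<X>) K x" and x_norm: "xmn \<X> K x = row_norm n \<xi>"
    unfolding x_def K_def
    using matin_block_diag[OF os_X matin_row_matrix[OF os_X \<xi>]]
      block_diag_norm[OF os_X n matin_row_matrix[OF os_X \<xi>] k] by auto
  have x_entry: "x t r = (if t < K \<and> r < K \<and> t = r div n * n then \<xi> (r mod n) else 0)" for t r
    unfolding x_def K_def by (rule block_diag_row_matrix[OF n])
  define a' where "a' = spread_matrix k n a"
  have a'_mem: "matin (acar \<A>) K a'" and a'_norm: "amn \<A> K a' \<le> amn \<A> k a"
    unfolding a'_def K_def
    by (intro matin_spread_matrix[OF os_A] a spread_matrix_norm_le[OF os_A asc_A_0 asc_A_1 k n])+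
  define y where "y r s = (\<Sum>t<K. lact \<X> (a' r t) (x t s))" for r s
  have y_mem: "matin (xcar \<X>) K y"
    using a'_mem x_mem unfolding matin_def y_def
    by (auto intro!: operator_space_sum_mem[OF os_X] lact_mem)
  have y_norm: "xmn \<X> K y \<le> amn \<A> K a' * xmn \<X> K x"
    unfolding y_def by (rule lact_matrix_norm_le[OF K a'_mem x_mem])
  have block_start: "r div n * n < K" if "r < K" for r
    using that div_times_less_eq_dividend[of r n] by linarith
  have y_entry: "y (r div n * n) s = lact \<X> (a (r div n) (s div n)) (\<xi> (s mod n))"
    if "r < K" "s < K" for r s
  proof -
    have "y (r div n * n) s = lact \<X> (a' (r div n * n) (s div n * n)) (x (s div n * n) s)"
      unfolding y_def using block_start[OF that(2)]
      by (intro sum_eq_single_nonzero) (auto simp: x_entry lact_zero_right)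
    then show ?thesis
      using that block_start n by (simp add: a'_def spread_matrix_def K_def x_entry)
  qed
  have "amn \<B> (k * n) (blk k n (\<lambda>p q i j. ipr \<X> (\<xi> i) (lact \<X> (a p q) (\<xi> j))))
      = amn \<B> K (\<lambda>r s. \<Sum>t<K. ipr \<X> (x t r) (y t s))"
    unfolding K_def[symmetric]
  proof (rule operator_space_norm_cong[OF os_B])
    fix r s assume r: "r < K" and s: "s < K"
    have "(\<Sum>t<K. ipr \<X> (x t r) (y t s)) = ipr \<X> (x (r div n * n) r) (y (r div n * n) s)"
      using block_start[OF r] by (intro sum_eq_single_nonzero) (auto simp: x_entry ipr_zero_left)
    then show "blk k n (\<lambda>p q i j. ipr \<X> (\<xi> i) (lact \<X> (a p q) (\<xi> j))) r s = (\<Sum>t<K. ipr \<X> (x t r) (y t s))"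
      using r s block_start[OF r] by (simp add: y_entry x_entry blk_def K_def)
  qed
  also have "\<dots> \<le> xmn \<X> K x * xmn \<X> K y"
    by (rule ipr_matrix_norm_le[OF K x_mem y_mem])
  also have "\<dots> \<le> xmn \<X> K x * (amn \<A> k a * xmn \<X> K x)"
  proof (rule mult_left_mono)
    show "xmn \<X> K y \<le> amn \<A> k a * xmn \<X> K x"
      using y_norm mult_right_mono[OF a'_norm operator_space_norm_nonneg[OF os_X K x_mem]]
      by (rule order_trans)
  qed (rule operator_space_norm_nonneg[OF os_X K x_mem])
  finally show ?thesis
    by (simp add: x_norm power2_eq_square ac_simps)
qed

lemma tau_completely_bounded:
  assumes \<xi>: "\<And>n. \<xi> n \<in> xcar \<X>" and rc: "row_cauchy \<X> \<xi>"
  shows "\<exists>C. \<forall>k\<ge>1. \<forall>a. matin (acar \<A>) k a \<longrightarrow> (\<forall>n\<ge>1.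
    amn \<B> (k * n) (blk k n (\<lambda>p q i j. ipr \<X> (\<xi> i) (lact \<X> (a p q) (\<xi> j)))) \<le> C * amn \<A> k a)"
proof -
  obtain Bd where Bd: "\<And>n N. n \<ge> 1 \<Longrightarrow> row_norm n (seq_trunc N \<xi>) \<le> Bd"
    using row_cauchy_bounded[OF \<xi> rc] by blast
  have "(row_norm n \<xi>)\<^sup>2 \<le> Bd\<^sup>2" if n: "n \<ge> 1" for n
  proof -
    have "row_norm n \<xi> = row_norm n (seq_trunc n \<xi>)"
      by (rule operator_space_norm_cong[OF os_X]) (simp add: row_matrix_def seq_trunc_def)
    moreover have "0 \<le> row_norm n (seq_trunc n \<xi>)"
      using seq_trunc_mem[OF \<xi>] by (rule row_norm_nonneg[OF n])
    ultimately show ?thesis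
      using Bd[OF n, of n] by (simp add: power_mono)
  qed
  have "amn \<B> (k * n) (blk k n (\<lambda>p q i j. ipr \<X> (\<xi> i) (lact \<X> (a p q) (\<xi> j)))) \<le> Bd\<^sup>2 * amn \<A> k a"
    if k: "k \<ge> 1" and n: "n \<ge> 1" and a: "matin (acar \<A>) k a" for k n a
  proof -
    have "amn \<B> (k * n) (blk k n (\<lambda>p q i j. ipr \<X> (\<xi> i) (lact \<X> (a p q) (\<xi> j))))
        \<le> amn \<A> k a * (row_norm n \<xi>)\<^sup>2"
      using k n a \<xi> by (rule tau_corner_norm_le)
    also have "\<dots> \<le> amn \<A> k a * Bd\<^sup>2"
      using \<open>n \<ge> 1 \<Longrightarrow> (row_norm n \<xi>)\<^sup>2 \<le> Bd\<^sup>2\<close> n operator_space_norm_nonneg[OF os_A k a]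
      by (intro mult_left_mono)
    finally show ?thesis
      by (simp add: mult.commute)
  qed
  then show ?thesis
    by blast
qed

lemma diff_gen_seq_if_row_cauchy:
  assumes \<xi>: "\<And>n. \<xi> n \<in> xcar \<X>"
    and dense: "closure (cspan (xsc \<X>) {ract \<X> (\<xi> n) b | n b. b \<in> acar \<B>}) = UNIV"
    and rc: "row_cauchy \<X> \<xi>"
  shows "diff_gen_seq \<A> \<B> \<X> \<xi>"
  unfolding diff_gen_seq_def
proof (intro conjI ballI allI)
  have "cspan (xsc \<X>) {ract \<X> (\<xi> n) b | n b. b \<in> acar \<B>} \<subseteq> cspan (xsc \<X>) {ract \<X> (\<xi> n) b | n b. True}"
    by (rule cspan_mono) blast
  then show "closure (cspan (xsc \<X>) {ract \<X> (\<xi> n) b | n b. True}) = UNIV"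
    using closure_mono dense by blast
  show "ipr \<X> (\<xi> n) (lact \<X> a (\<xi> m) + xsc \<X> l (\<xi> m)) \<in> acar \<B>" if "a \<in> acar \<A>" for a l n m
    using that \<xi> by (intro ipr_mem operator_space_add_mem[OF os_X] operator_space_scale_mem[OF os_X] lact_mem)
  show "KB_cauchy \<B> (\<lambda>n m. ipr \<X> (\<xi> n) (lact \<X> a (\<xi> m) + xsc \<X> l (\<xi> m)))" if "a \<in> acar \<A>" for a l
    using \<xi> rc that by (rule KB_cauchy_pairing)
qed (rule tau_completely_bounded[OF \<xi> rc])

lemma cspan_add_mem:
  assumes "x \<in> cspan (xsc \<X>) S" "y \<in> cspan (xsc \<X>) S"
  shows "x + y \<in> cspan (xsc \<X>) S"
proof -
  obtain F c where F: "finite F" "F \<subseteq> S" "x = (\<Sum>s\<in>F. xsc \<X> (c s) s)"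
    using assms(1) unfolding cspan_def by blast
  obtain G d where G: "finite G" "G \<subseteq> S" "y = (\<Sum>s\<in>G. xsc \<X> (d s) s)"
    using assms(2) unfolding cspan_def by blast
  define e where "e s = (if s \<in> F then c s else 0) + (if s \<in> G then d s else 0)" for s
  have "(\<Sum>s\<in>F \<union> G. xsc \<X> (if s \<in> F then c s else 0) s) = (\<Sum>s\<in>F. xsc \<X> (if s \<in> F then c s else 0) s)"
    by (rule sum.mono_neutral_right) (use F G in \<open>auto simp: xsc_0\<close>)
  moreover have "(\<Sum>s\<in>F \<union> G. xsc \<X> (if s \<in> G then d s else 0) s) = (\<Sum>s\<in>G. xsc \<X> (if s \<in> G then d s else 0) s)"
    by (rule sum.mono_neutral_right) (use F G in \<open>auto simp: xsc_0\<close>)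
  ultimately have "(\<Sum>s\<in>F \<union> G. xsc \<X> (e s) s) = x + y"
    unfolding e_def xsc_add_left sum.distrib using F G by simp
  then show ?thesis
    unfolding cspan_def by (intro CollectI exI[of _ "F \<union> G"] exI[of _ e]) (use F G in auto)
qed

lemma closure_cspan_subset:
  assumes T: "T \<subseteq> closure (cspan (xsc \<X>) S)" and T_scale: "\<And>c t. t \<in> T \<Longrightarrow> xsc \<X> c t \<in> T"
  shows "closure (cspan (xsc \<X>) T) \<subseteq> closure (cspan (xsc \<X>) S)"
proof (rule closure_minimal)
  show "cspan (xsc \<X>) T \<subseteq> closure (cspan (xsc \<X>) S)"
  proof
    fix x assume "x \<in> cspan (xsc \<X>) T"
    then obtain F c where F: "finite F" "F \<subseteq> T" "x = (\<Sum>s\<in>F. xsc \<X> (c s) s)"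
      unfolding cspan_def by blast
    have "(\<Sum>s\<in>G. xsc \<X> (c s) s) \<in> closure (cspan (xsc \<X>) S)" if "finite G" "G \<subseteq> T" for G
      using that
    proof (induction G rule: finite_induct)
      case empty
      then show ?case
        using cspan_zero_mem closure_subset by auto
    next
      case (insert s G)
      then show ?case
        using T T_scale by (auto intro!: closure_add_mem cspan_add_mem)
    qed
    then show "x \<in> closure (cspan (xsc \<X>) S)"
      using F by simp
  qed
qed simp

lemma lev1_xsc: "x \<in> xcar \<X> \<Longrightarrow> lev1 (xmn \<X>) (xsc \<X> c x) = cmod c * lev1 (xmn \<X>) x"
  unfolding lev1_def by (rule operator_space_norm_scale[OF os_X]) (auto simp: matin_def)

lemma row_cauchy_if_lev1_le_half_power:
  assumes \<xi>: "\<And>k. \<xi> k \<in> xcar \<X>" and small: "\<And>k. lev1 (xmn \<X>) (\<xi> k) \<le> (1/2) ^ k"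
  shows "row_cauchy \<X> \<xi>"
  unfolding row_cauchy_iff
proof (intro allI impI)
  fix \<epsilon> :: real assume "\<epsilon> > 0"
  then obtain N0 where N0: "(1/2::real) ^ N0 < \<epsilon> / 2"
    using real_arch_pow_inv[of "\<epsilon> / 2" "1/2"] by auto
  have mem: "\<And>N j. seq_trunc N \<xi> j \<in> xcar \<X>"
    by (rule seq_trunc_mem[OF \<xi>])
  have lev1_zero: "lev1 (xmn \<X>) 0 = 0"
    unfolding lev1_def by (rule operator_space_norm_zero[OF os_X]) simp
  have lev1_uminus: "lev1 (xmn \<X>) (- x) = lev1 (xmn \<X>) x" if "x \<in> xcar \<X>" for x
    using lev1_xsc[OF that, of "- 1"] by (simp add: xsc_minus_1)
  have "row_norm (Suc (max N N')) (\<lambda>j. seq_trunc N \<xi> j - seq_trunc N' \<xi> j) < \<epsilon>"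
    if NN: "N \<ge> N0" "N' \<ge> N0" for N N'
  proof -
    have "row_norm (Suc (max N N')) (\<lambda>j. seq_trunc N \<xi> j - seq_trunc N' \<xi> j)
        \<le> (\<Sum>j<Suc (max N N'). lev1 (xmn \<X>) (seq_trunc N \<xi> j - seq_trunc N' \<xi> j))"
      using mem xcar_diff_mem by (intro row_matrix_norm_le_sum[OF os_X xsc_0 xsc_1]) auto
    also have "\<dots> \<le> (\<Sum>j<Suc (max N N'). if N0 \<le> j then (1/2::real) ^ j else 0)"
    proof (rule sum_mono)
      fix j
      show "lev1 (xmn \<X>) (seq_trunc N \<xi> j - seq_trunc N' \<xi> j) \<le> (if N0 \<le> j then (1/2::real) ^ j else 0)"
        using NN small[of j]
        by (cases "j < N"; cases "j < N'") (auto simp: seq_trunc_def lev1_zero lev1_uminus \<xi>)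
    qed
    also have "\<dots> \<le> 2 * (1/2) ^ N0"
      by (rule sum_tail_half_powers_le)
    also have "\<dots> < \<epsilon>"
      using N0 by simp
    finally show ?thesis .
  qed
  then show "\<exists>N0. \<forall>N\<ge>N0. \<forall>N'\<ge>N0.
      row_norm (Suc (max N N')) (\<lambda>j. seq_trunc N \<xi> j - seq_trunc N' \<xi> j) < \<epsilon>"
    by blast
qed

section \<open>A generating sequence with Cauchy rows\<close>

lemma ract_mem_closure_image:
  assumes "x \<in> closure Z"
  shows "ract \<X> x b \<in> closure ((\<lambda>z. ract \<X> z b) ` Z)"
  unfolding closure_approachable
proof (intro allI impI)
  fix e :: real assume "e > 0"
  define C where "C = sqrt (norm (ast \<B> b) * norm b) + 1"
  have "C > 0"
    unfolding C_def by (simp add: add_nonneg_pos)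
  then obtain z where z: "z \<in> Z" "dist z x < e / C"
    using assms \<open>e > 0\<close> unfolding closure_approachable by (meson divide_pos_pos)
  have "dist (ract \<X> z b) (ract \<X> x b) = norm (ract \<X> (z - x) b)"
    by (simp add: dist_norm ract_diff_left)
  also have "\<dots> \<le> sqrt (norm (ast \<B> b) * norm b) * norm (z - x)"
    by (rule norm_ract_le)
  also have "\<dots> \<le> C * dist z x"
    unfolding C_def dist_norm by (intro mult_right_mono) auto
  also have "\<dots> < e"
    using z(2) \<open>C > 0\<close> by (simp add: field_simps)
  finally show "\<exists>y\<in>(\<lambda>z. ract \<X> z b) ` Z. dist y (ract \<X> x b) < e"
    using z(1) by blast
qed

lemma closure_cspan_ract_subset:
  assumes \<eta>: "\<And>n. \<eta> n \<in> closure (Z n)"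
    and Z: "\<And>n z b. z \<in> Z n \<Longrightarrow> b \<in> acar \<B> \<Longrightarrow> ract \<X> z b \<in> cspan (xsc \<X>) S"
  shows "closure (cspan (xsc \<X>) {ract \<X> (\<eta> n) b | n b. b \<in> acar \<B>}) \<subseteq> closure (cspan (xsc \<X>) S)"
proof (rule closure_cspan_subset)
  show "{ract \<X> (\<eta> n) b | n b. b \<in> acar \<B>} \<subseteq> closure (cspan (xsc \<X>) S)"
  proof clarify
    fix n b assume "b \<in> acar \<B>"
    then have "(\<lambda>z. ract \<X> z b) ` Z n \<subseteq> cspan (xsc \<X>) S"
      by (auto intro: Z)
    then show "ract \<X> (\<eta> n) b \<in> closure (cspan (xsc \<X>) S)"
      using ract_mem_closure_image[OF \<eta>] by (rule subsetD[OF closure_mono])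
  qed
  show "xsc \<X> c t \<in> {ract \<X> (\<eta> n) b | n b. b \<in> acar \<B>}"
    if t: "t \<in> {ract \<X> (\<eta> n) b | n b. b \<in> acar \<B>}" for c t
  proof -
    obtain n b where "t = ract \<X> (\<eta> n) b" "b \<in> acar \<B>"
      using t by blast
    then have "xsc \<X> c t = ract \<X> (\<eta> n) (asc \<B> c b)" "asc \<B> c b \<in> acar \<B>"
      by (simp_all add: ract_asc operator_space_scale_mem[OF os_B])
    then show ?thesis
      by blast
  qed
qed

lemma rescaled_lev1_le_half_power:
  assumes z: "\<And>k. z k \<in> xcar \<X>"
  obtains c where "\<And>k. 0 < c k" "\<And>k. lev1 (xmn \<X>) (xsc \<X> (complex_of_real (c k)) (z k)) \<le> (1/2) ^ k"
proof -
  define c where "c k = 1 / (2 ^ k * (1 + lev1 (xmn \<X>) (z k)))" for k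
  have lev1_nonneg: "0 \<le> lev1 (xmn \<X>) (z k)" for k
    unfolding lev1_def using z by (simp add: operator_space_norm_nonneg[OF os_X] matin_def)
  have c_pos: "0 < c k" for k
    unfolding c_def using lev1_nonneg[of k] by (simp add: add_nonneg_pos)
  have "lev1 (xmn \<X>) (xsc \<X> (complex_of_real (c k)) (z k)) \<le> (1/2) ^ k" for k
  proof -
    have "lev1 (xmn \<X>) (xsc \<X> (complex_of_real (c k)) (z k)) = c k * lev1 (xmn \<X>) (z k)"
      unfolding lev1_xsc[OF z] norm_of_real using c_pos[of k] by simp
    also have "\<dots> = (1/2) ^ k * (lev1 (xmn \<X>) (z k) / (1 + lev1 (xmn \<X>) (z k)))"
      by (simp add: c_def power_one_over)
    also have "\<dots> \<le> (1/2) ^ k"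
      using lev1_nonneg[of k] by (intro mult_left_le) auto
    finally show ?thesis .
  qed
  with c_pos show ?thesis
    by (rule that)
qed

lemma exists_dense_row_cauchy_seq:
  assumes "countably_generated \<B> \<X>"
  shows "\<exists>\<xi>. (\<forall>n. \<xi> n \<in> xcar \<X>) \<and>
    closure (cspan (xsc \<X>) {ract \<X> (\<xi> n) b | n b. b \<in> acar \<B>}) = UNIV \<and> row_cauchy \<X> \<xi>"
proof -
  obtain \<eta> :: "nat \<Rightarrow> 'x" where \<eta>: "closure (cspan (xsc \<X>) {ract \<X> (\<eta> n) b | n b. b \<in> acar \<B>}) = UNIV"
    using assms unfolding countably_generated_def by blast
  have "\<exists>\<zeta> :: nat \<Rightarrow> 'x. (\<forall>m. \<zeta> m \<in> xcar \<X>) \<and> \<eta> n \<in> closure (range \<zeta>)" for n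
    using closure_xcar by (intro closure_seq_approximates) simp
  then have "\<exists>\<zeta> :: nat \<Rightarrow> nat \<Rightarrow> 'x. \<forall>n. (\<forall>m. \<zeta> n m \<in> xcar \<X>) \<and> \<eta> n \<in> closure (range (\<zeta> n))"
    by (intro choice allI)
  then obtain \<zeta> :: "nat \<Rightarrow> nat \<Rightarrow> 'x" where \<zeta>_mem: "\<And>n m. \<zeta> n m \<in> xcar \<X>" and \<eta>_closure: "\<And>n. \<eta> n \<in> closure (range (\<zeta> n))"
    by blast
  define z where "z k = (case prod_decode k of (n, m) \<Rightarrow> \<zeta> n m)" for k
  have z_mem: "z k \<in> xcar \<X>" for k
    unfolding z_def using \<zeta>_mem by (simp split: prod.split)
  obtain c where c_pos: "\<And>k. 0 < c k"
    and small: "\<And>k. lev1 (xmn \<X>) (xsc \<X> (complex_of_real (c k)) (z k)) \<le> (1/2) ^ k"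
    using rescaled_lev1_le_half_power[of z] z_mem by metis
  define \<xi> where "\<xi> k = xsc \<X> (complex_of_real (c k)) (z k)" for k
  have \<xi>_mem: "\<xi> k \<in> xcar \<X>" for k
    unfolding \<xi>_def using z_mem by (rule operator_space_scale_mem[OF os_X])
  have "row_cauchy \<X> \<xi>"
    using \<xi>_mem small unfolding \<xi>_def by (rule row_cauchy_if_lev1_le_half_power)
  define S where "S = {ract \<X> (\<xi> n) b | n b. b \<in> acar \<B>}"
  have z_span: "ract \<X> (z k) b \<in> cspan (xsc \<X>) S" if "b \<in> acar \<B>" for k b
  proof -
    have "xsc \<X> (complex_of_real (1 / c k)) (ract \<X> (\<xi> k) b) = (1 / c k) *\<^sub>R c k *\<^sub>R ract \<X> (z k) b"
      by (simp only: \<xi>_def ract_xsc) (simp only: xsc_of_real)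
    then have "ract \<X> (z k) b = (\<Sum>s\<in>{ract \<X> (\<xi> k) b}. xsc \<X> (complex_of_real (1 / c k)) s)"
      using c_pos[of k] by simp
    moreover have "{ract \<X> (\<xi> k) b} \<subseteq> S"
      unfolding S_def using that by blast
    ultimately show ?thesis
      unfolding cspan_def
      by (intro CollectI exI[of _ "{ract \<X> (\<xi> k) b}"] exI[of _ "\<lambda>_. complex_of_real (1 / c k)"] conjI)
        simp_all
  qed
  have "closure (cspan (xsc \<X>) {ract \<X> (\<eta> n) b | n b. b \<in> acar \<B>}) \<subseteq> closure (cspan (xsc \<X>) S)"
  proof (rule closure_cspan_ract_subset[where Z = "\<lambda>n. range (\<zeta> n)"])
    show "\<eta> n \<in> closure (range (\<zeta> n))" for n
      by (rule \<eta>_closure)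
    show "ract \<X> y b \<in> cspan (xsc \<X>) S" if "y \<in> range (\<zeta> n)" "b \<in> acar \<B>" for n y b
    proof -
      obtain m where "y = z (prod_encode (n, m))"
        using \<open>y \<in> range (\<zeta> n)\<close> by (auto simp: z_def)
      then show ?thesis
        using z_span[OF \<open>b \<in> acar \<B>\<close>] by simp
    qed
  qed
  then have "closure (cspan (xsc \<X>) S) = UNIV"
    using \<eta> by blast
  then show ?thesis
    using \<xi>_mem \<open>row_cauchy \<X> \<xi>\<close> unfolding S_def by blast
qed

end

theorem mainTheorem15:
  fixes \<A> :: "'a::{real_normed_algebra,banach} opalg"
    and \<B> :: "'b::{real_normed_algebra,banach} opalg"
    and \<X> :: "('a, 'b, 'x::{real_normed_vector,banach}) opcorr"
  assumes "op_star_corr \<A> \<B> \<X>"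
    and "countably_generated \<B> \<X>"
  shows "(\<exists>\<xi>. (\<forall>n. \<xi> n \<in> xcar \<X>) \<and>
            closure (cspan (xsc \<X>) {ract \<X> (\<xi> n) b | n b. b \<in> acar \<B>}) = UNIV \<and>
            row_cauchy \<X> \<xi>)
       \<and> differentiable_corr \<A> \<B> \<X>
       \<and> (\<forall>\<xi>. (\<forall>n. \<xi> n \<in> xcar \<X>) \<and>
              closure (cspan (xsc \<X>) {ract \<X> (\<xi> n) b | n b. b \<in> acar \<B>}) = UNIV \<and>
              row_cauchy \<X> \<xi> \<longrightarrow> diff_gen_seq \<A> \<B> \<X> \<xi>)"
proof -
  interpret op_star_correspondence \<A> \<B> \<X>
    by (rule op_star_correspondence.intro) (rule assms(1))
  have generating: "\<forall>\<xi>. (\<forall>n. \<xi> n \<in> xcar \<X>) \<and>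
      closure (cspan (xsc \<X>) {ract \<X> (\<xi> n) b | n b. b \<in> acar \<B>}) = UNIV \<and>
      row_cauchy \<X> \<xi> \<longrightarrow> diff_gen_seq \<A> \<B> \<X> \<xi>"
    using diff_gen_seq_if_row_cauchy by blast
  have exists: "\<exists>\<xi>. (\<forall>n. \<xi> n \<in> xcar \<X>) \<and>
      closure (cspan (xsc \<X>) {ract \<X> (\<xi> n) b | n b. b \<in> acar \<B>}) = UNIV \<and> row_cauchy \<X> \<xi>"
    by (rule exists_dense_row_cauchy_seq[OF assms(2)])
  then have "differentiable_corr \<A> \<B> \<X>"
    using generating unfolding differentiable_corr_def by blast
  with exists generating show ?thesis
    by blast
qed

end
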